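(* Let $(A,\mu,E,\Delta,\epsilon)$ be a weak multiplier bialgebra over a field $k$. The following are equivalent: (1) $E=1$ in $\mathbb M(A\otimes A)$; (2) $\epsilon(ab)=\epsilon(a)\epsilon(b)$ for all $a,b\in A$; (3) $\overline\sqcap^L(a)=\epsilon(a)1$ in $\mathbb M(A)$ for all $a\in A$; (4) $\overline\sqcap^R(a)=\epsilon(a)1$ in $\mathbb M(A)$ for all $a\in A$.
   Context: Let $k$ be a field, $\otimes=\otimes_k$. A non-unital $k$-algebra $A$ with multiplication $\mu(a\otimes b)=ab$ is idempotent if $\mu$ is surjective and has non-degenerate multiplication if ($ab=0\ \forall a$)$\Rightarrow b=0$ and ($ba=0\ \forall a$)$\Rightarrow b=0$. Its multiplier algebra $\mathbb M(A)$ consists of pairs $(\lambda,\rho)$ of linear maps $A\to A$ with $a\lambda(b)=\rho(a)b$ (product $(\lambda',\rho')(\lambda,\rho)=(\lambda'\lambda,\rho\rho')$, unit $1=(\mathrm{id},\mathrm{id})$), containing $A$ as a dense two-sided ideal; $A\otimes A\subseteq\mathbb M(A)\otimes\mathbb M(A)\subseteq\mathbb M(A\otimes A)$. $\langle X\rangle$ is linear span; multiplicative $\gamma:A\to\mathbb M(B)$ with idempotent $e\in\mathbb M(B)$, $\langle\gamma(a)b\rangle=eB$, $\langle b\gamma(a)\rangle=Be$, extends uniquely to multiplicative $\overline\gamma:\mathbb M(A)\to\mathbb M(B)$ with $\overline\gamma(1)=e$. A weak multiplier bialgebra: idempotent $A$ with non-degenerate multiplication, idempotent $E\in\mathbb M(A\otimes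 A)$, multiplicative linear $\Delta:A\to\mathbb M(A\otimes A)$, linear $\epsilon:A\to k$ with: (i) $T_1(a\otimes b):=\Delta(a)(1\otimes b)$, $T_2(a\otimes b):=(a\otimes1)\Delta(b)$ lie in $A\otimes A$; (ii) $(T_2\otimes\mathrm{id})(\mathrm{id}\otimes T_1)=(\mathrm{id}\otimes T_1)(T_2\otimes\mathrm{id})$; (iii) $(\epsilon\otimes\mathrm{id})T_1=\mu=(\mathrm{id}\otimes\epsilon)T_2$; (iv) $\langle\Delta(a)(b\otimes b')\rangle=\langle E(b\otimes b')\rangle$ and $\langle(b\otimes b')\Delta(a)\rangle=\langle(b\otimes b')E\rangle$; (v) $(E\otimes1)(1\otimes E)=E^{(3)}=(1\otimes E)(E\otimes1)$ with $E^{(3)}:=(\overline{\mathrm{id}\otimes\Delta})(E)=(\overline{\Delta\otimes\mathrm{id}})(E)$; (vi) $(\epsilon\otimes\mathrm{id})((1\otimes a)E(b\otimes c))=(\epsilon\otimes\mathrm{id})(\Delta(a)(b\otimes c))$ and $(\epsilon\otimes\mathrm{id})((a\otimes b)E(1\otimes c))=(\epsilon\otimes\mathrm{id})((a\otimes b)\Delta(c))$. For $a\in A$: $\overline\sqcap^L(a)\in\mathbb M(A)$ is the multiplier with $\overline\sqcap^L(a)b=(\epsilon\otimes\mathrm{id})((a\otimes1)\Delta(b))$ and $b\overline\sqcap^L(a)=(\epsilon\otimes\mathrm{id})((a\otimes b)E)$; $\overline\sqcap^R(a)\in\mathbb M(A)$ is the multiplier with $b\overline\sqcap^R(a)=(\mathrm{id}\otimes\epsilon)(\Delta(b)(1\otimes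 a))$ and $\overline\sqcap^R(a)b=(\mathrm{id}\otimes\epsilon)(E(b\otimes a))$. *)

theory Defs
  imports Main "HOL-Library.Function_Algebras"
begin

text \<open>
  The algebra A is the type 'a
  (class ring, i.e. a possibly NON-unital associative ring; its multiplication is (*))
  together with a scalar multiplication sc :: 'k => 'a => 'a making it a k-algebra.

  A (x) A is modelled concretely (and canonically) as the linear span,
  inside the k-valued functions on pairs of maps A -> k, of the functions
  a (x) b := ((f,g) |-> f(a) g(b)) for linear functionals f,g (and 0 elsewhere).
  Since A (x) A -> (A* (x) A*)* is injective over a field, this span is (isomorphic to)
  A (x) A.  Likewise for A (x) A (x) A.  Linear maps out of tensor products are defined
  by the universal property (lift2, lift3), i.e. by multilinear extension; they are only
  applied to multilinear data.

  A multiplier of an algebra with carrier S, scalar action sc and product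
  mul is a pair (L,R) of linear maps S -> S with  mul a (L b) = mul (R a) b.  Since only
  the values on S matter, equality of multipliers is equality on S (meq).
\<close>

type_synonym ('k,'a) t2 = "('a \<Rightarrow> 'k) \<times> ('a \<Rightarrow> 'k) \<Rightarrow> 'k"
type_synonym ('k,'a) t3 = "('a \<Rightarrow> 'k) \<times> ('a \<Rightarrow> 'k) \<times> ('a \<Rightarrow> 'k) \<Rightarrow> 'k"
type_synonym 'v mlt = "('v \<Rightarrow> 'v) \<times> ('v \<Rightarrow> 'v)"

definition k_algebra :: "('k::field \<Rightarrow> 'a::ring \<Rightarrow> 'a) \<Rightarrow> bool" where
  "k_algebra sc \<longleftrightarrow>
     (\<forall>c x y. sc c (x + y) = sc c x + sc c y) \<and>
     (\<forall>c d x. sc (c + d) x = sc c x + sc d x) \<and>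
     (\<forall>c d x. sc c (sc d x) = sc (c * d) x) \<and>
     (\<forall>x. sc 1 x = x) \<and>
     (\<forall>c x y. sc c (x * y) = sc c x * y \<and> sc c (x * y) = x * sc c y)"

definition lin_fun :: "('k::field \<Rightarrow> 'a::ab_group_add \<Rightarrow> 'a) \<Rightarrow> ('a \<Rightarrow> 'k) \<Rightarrow> bool" where
  "lin_fun sc f \<longleftrightarrow> (\<forall>x y. f (x + y) = f x + f y) \<and> (\<forall>c x. f (sc c x) = c * f x)"

definition fsc :: "'k::field \<Rightarrow> ('x \<Rightarrow> 'k) \<Rightarrow> ('x \<Rightarrow> 'k)" where
  "fsc c t = (\<lambda>x. c * t x)"

definition fspan :: "('x \<Rightarrow> 'k::field) set \<Rightarrow> ('x \<Rightarrow> 'k) set" where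
  "fspan X = {(\<Sum>i<n. fsc (c i) (x i)) | (n::nat) c x. \<forall>i<n. x i \<in> X}"

section \<open>Tensor products A (x) A and A (x) A (x) A\<close>

definition tens2 :: "('k::field \<Rightarrow> 'a::ab_group_add \<Rightarrow> 'a) \<Rightarrow> 'a \<Rightarrow> 'a \<Rightarrow> ('k,'a) t2" where
  "tens2 sc a b = (\<lambda>(f,g). if lin_fun sc f \<and> lin_fun sc g then f a * g b else 0)"

definition tens3 :: "('k::field \<Rightarrow> 'a::ab_group_add \<Rightarrow> 'a) \<Rightarrow> 'a \<Rightarrow> 'a \<Rightarrow> 'a \<Rightarrow> ('k,'a) t3" where
  "tens3 sc a b c = (\<lambda>(f,g,h). if lin_fun sc f \<and> lin_fun sc g \<and> lin_fun sc h
                               then f a * g b * h c else 0)"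

definition TT2 :: "('k::field \<Rightarrow> 'a::ab_group_add \<Rightarrow> 'a) \<Rightarrow> ('k,'a) t2 set" where
  "TT2 sc = {(\<Sum>i<n. tens2 sc (a i) (b i)) | (n::nat) a b. True}"

definition TT3 :: "('k::field \<Rightarrow> 'a::ab_group_add \<Rightarrow> 'a) \<Rightarrow> ('k,'a) t3 set" where
  "TT3 sc = {(\<Sum>i<n. tens3 sc (a i) (b i) (c i)) | (n::nat) a b c. True}"

definition lift2 :: "('k::field \<Rightarrow> 'a::ab_group_add \<Rightarrow> 'a) \<Rightarrow> ('a \<Rightarrow> 'a \<Rightarrow> 'b::comm_monoid_add)
                      \<Rightarrow> ('k,'a) t2 \<Rightarrow> 'b" where
  "lift2 sc \<beta> t = (SOME v. \<exists>(n::nat) a b. t = (\<Sum>i<n. tens2 sc (a i) (b i)) \<and> v = (\<Sum>i<n. \<beta> (a i) (b i)))"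

definition lift3 :: "('k::field \<Rightarrow> 'a::ab_group_add \<Rightarrow> 'a) \<Rightarrow> ('a \<Rightarrow> 'a \<Rightarrow> 'a \<Rightarrow> 'b::comm_monoid_add)
                      \<Rightarrow> ('k,'a) t3 \<Rightarrow> 'b" where
  "lift3 sc \<beta> t = (SOME v. \<exists>(n::nat) a b c. t = (\<Sum>i<n. tens3 sc (a i) (b i) (c i))
                                   \<and> v = (\<Sum>i<n. \<beta> (a i) (b i) (c i)))"

definition mult2 :: "('k::field \<Rightarrow> 'a::ring \<Rightarrow> 'a) \<Rightarrow> ('k,'a) t2 \<Rightarrow> ('k,'a) t2 \<Rightarrow> ('k,'a) t2" where
  "mult2 sc t s = lift2 sc (\<lambda>a b. lift2 sc (\<lambda>c d. tens2 sc (a * c) (b * d)) s) t"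

definition mult3 :: "('k::field \<Rightarrow> 'a::ring \<Rightarrow> 'a) \<Rightarrow> ('k,'a) t3 \<Rightarrow> ('k,'a) t3 \<Rightarrow> ('k,'a) t3" where
  "mult3 sc t s = lift3 sc (\<lambda>a b c. lift3 sc (\<lambda>a' b' c'. tens3 sc (a * a') (b * b') (c * c')) s) t"

definition ltens :: "('k::field \<Rightarrow> 'a::ab_group_add \<Rightarrow> 'a) \<Rightarrow> 'a \<Rightarrow> ('k,'a) t2 \<Rightarrow> ('k,'a) t3" where
  "ltens sc x s = lift2 sc (\<lambda>y z. tens3 sc x y z) s"

definition rtens :: "('k::field \<Rightarrow> 'a::ab_group_add \<Rightarrow> 'a) \<Rightarrow> ('k,'a) t2 \<Rightarrow> 'a \<Rightarrow> ('k,'a) t3" where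
  "rtens sc s z = lift2 sc (\<lambda>x y. tens3 sc x y z) s"

definition id_tensor :: "('k::field \<Rightarrow> 'a::ab_group_add \<Rightarrow> 'a) \<Rightarrow> (('k,'a) t2 \<Rightarrow> ('k,'a) t2)
                          \<Rightarrow> ('k,'a) t3 \<Rightarrow> ('k,'a) t3" where
  "id_tensor sc F = lift3 sc (\<lambda>x y z. ltens sc x (F (tens2 sc y z)))"

definition tensor_id :: "('k::field \<Rightarrow> 'a::ab_group_add \<Rightarrow> 'a) \<Rightarrow> (('k,'a) t2 \<Rightarrow> ('k,'a) t2)
                          \<Rightarrow> ('k,'a) t3 \<Rightarrow> ('k,'a) t3" where
  "tensor_id sc F = lift3 sc (\<lambda>x y z. rtens sc (F (tens2 sc x y)) z)"

definition mu :: "('k::field \<Rightarrow> 'a::ring \<Rightarrow> 'a) \<Rightarrow> ('k,'a) t2 \<Rightarrow> 'a" where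
  "mu sc = lift2 sc (\<lambda>a b. a * b)"

definition eps_id :: "('k::field \<Rightarrow> 'a::ring \<Rightarrow> 'a) \<Rightarrow> ('a \<Rightarrow> 'k) \<Rightarrow> ('k,'a) t2 \<Rightarrow> 'a" where
  "eps_id sc \<epsilon> = lift2 sc (\<lambda>a b. sc (\<epsilon> a) b)"

definition id_eps :: "('k::field \<Rightarrow> 'a::ring \<Rightarrow> 'a) \<Rightarrow> ('a \<Rightarrow> 'k) \<Rightarrow> ('k,'a) t2 \<Rightarrow> 'a" where
  "id_eps sc \<epsilon> = lift2 sc (\<lambda>a b. sc (\<epsilon> b) a)"

section \<open>Multipliers\<close>

definition is_mlt :: "'v set \<Rightarrow> ('k \<Rightarrow> 'v \<Rightarrow> 'v) \<Rightarrow> ('v \<Rightarrow> 'v \<Rightarrow> 'v) \<Rightarrow> ('v::plus) mlt \<Rightarrow> bool" where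
  "is_mlt S sc mul m \<longleftrightarrow>
     (\<forall>x\<in>S. fst m x \<in> S \<and> snd m x \<in> S) \<and>
     (\<forall>x\<in>S. \<forall>y\<in>S. fst m (x + y) = fst m x + fst m y \<and> snd m (x + y) = snd m x + snd m y) \<and>
     (\<forall>c. \<forall>x\<in>S. fst m (sc c x) = sc c (fst m x) \<and> snd m (sc c x) = sc c (snd m x)) \<and>
     (\<forall>a\<in>S. \<forall>b\<in>S. mul a (fst m b) = mul (snd m a) b)"

definition meq :: "'v set \<Rightarrow> 'v mlt \<Rightarrow> 'v mlt \<Rightarrow> bool" where
  "meq S m m' \<longleftrightarrow> (\<forall>x\<in>S. fst m x = fst m' x \<and> snd m x = snd m' x)"

definition mprod :: "'v mlt \<Rightarrow> 'v mlt \<Rightarrow> 'v mlt" where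
  "mprod m' m = (fst m' \<circ> fst m, snd m \<circ> snd m')"

definition mone :: "'v mlt" where
  "mone = (id, id)"

definition madd :: "('v::plus) mlt \<Rightarrow> 'v mlt \<Rightarrow> 'v mlt" where
  "madd m m' = ((\<lambda>x. fst m x + fst m' x), (\<lambda>x. snd m x + snd m' x))"

definition msc :: "('k \<Rightarrow> 'v \<Rightarrow> 'v) \<Rightarrow> 'k \<Rightarrow> 'v mlt \<Rightarrow> 'v mlt" where
  "msc sc c m = ((\<lambda>x. sc c (fst m x)), (\<lambda>x. sc c (snd m x)))"

definition membed :: "('v \<Rightarrow> 'v \<Rightarrow> 'v) \<Rightarrow> 'v \<Rightarrow> 'v mlt" where
  "membed mul a = (mul a, \<lambda>x. mul x a)"

definition one_tens :: "('k::field \<Rightarrow> 'a::ring \<Rightarrow> 'a) \<Rightarrow> 'a \<Rightarrow> ('k,'a) t2 mlt" where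
  "one_tens sc b = (lift2 sc (\<lambda>x y. tens2 sc x (b * y)), lift2 sc (\<lambda>x y. tens2 sc x (y * b)))"

definition tens_one :: "('k::field \<Rightarrow> 'a::ring \<Rightarrow> 'a) \<Rightarrow> 'a \<Rightarrow> ('k,'a) t2 mlt" where
  "tens_one sc a = (lift2 sc (\<lambda>x y. tens2 sc (a * x) y), lift2 sc (\<lambda>x y. tens2 sc (x * a) y))"

definition E_tens_one :: "('k::field \<Rightarrow> 'a::ring \<Rightarrow> 'a) \<Rightarrow> ('k,'a) t2 mlt \<Rightarrow> ('k,'a) t3 mlt" where
  "E_tens_one sc E = (lift3 sc (\<lambda>x y z. rtens sc (fst E (tens2 sc x y)) z),
                      lift3 sc (\<lambda>x y z. rtens sc (snd E (tens2 sc x y)) z))"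

definition one_tens_E :: "('k::field \<Rightarrow> 'a::ring \<Rightarrow> 'a) \<Rightarrow> ('k,'a) t2 mlt \<Rightarrow> ('k,'a) t3 mlt" where
  "one_tens_E sc E = (lift3 sc (\<lambda>x y z. ltens sc x (fst E (tens2 sc y z))),
                      lift3 sc (\<lambda>x y z. ltens sc x (snd E (tens2 sc y z))))"

text \<open>id (x) Delta and Delta (x) id : A (x) A -> M(A (x) A (x) A),
  x (x) y |-> x (x) Delta(y)  resp.  Delta(x) (x) y\<close>
definition id_tens_Delta :: "('k::field \<Rightarrow> 'a::ring \<Rightarrow> 'a) \<Rightarrow> ('a \<Rightarrow> ('k,'a) t2 mlt)
                              \<Rightarrow> ('k,'a) t2 \<Rightarrow> ('k,'a) t3 mlt" where
  "id_tens_Delta sc \<Delta> t =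
     ((\<lambda>w. lift2 sc (\<lambda>x y. lift3 sc (\<lambda>u v r. ltens sc (x * u) (fst (\<Delta> y) (tens2 sc v r))) w) t),
      (\<lambda>w. lift2 sc (\<lambda>x y. lift3 sc (\<lambda>u v r. ltens sc (u * x) (snd (\<Delta> y) (tens2 sc v r))) w) t))"

definition Delta_tens_id :: "('k::field \<Rightarrow> 'a::ring \<Rightarrow> 'a) \<Rightarrow> ('a \<Rightarrow> ('k,'a) t2 mlt)
                              \<Rightarrow> ('k,'a) t2 \<Rightarrow> ('k,'a) t3 mlt" where
  "Delta_tens_id sc \<Delta> t =
     ((\<lambda>w. lift2 sc (\<lambda>x y. lift3 sc (\<lambda>u v r. rtens sc (fst (\<Delta> x) (tens2 sc u v)) (y * r)) w) t),
      (\<lambda>w. lift2 sc (\<lambda>x y. lift3 sc (\<lambda>u v r. rtens sc (snd (\<Delta> x) (tens2 sc u v)) (r * y)) w) t))"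

text \<open>X is the value at the multiplier m of the extension gamma-bar : M(A (x) A) -> M(A (x) A (x) A)
  of a multiplicative gamma with gamma-bar(1) = e; it is characterised by
  X = X e = e X,  X (gamma(t) w) = gamma(m t) w  and  (w gamma(t)) X = w gamma(t m).\<close>
definition ext_value :: "('k::field \<Rightarrow> 'a::ring \<Rightarrow> 'a) \<Rightarrow> (('k,'a) t2 \<Rightarrow> ('k,'a) t3 mlt)
                          \<Rightarrow> ('k,'a) t3 mlt \<Rightarrow> ('k,'a) t2 mlt \<Rightarrow> ('k,'a) t3 mlt \<Rightarrow> bool" where
  "ext_value sc \<gamma> e m X \<longleftrightarrow>
     is_mlt (TT3 sc) fsc (mult3 sc) X \<and>
     meq (TT3 sc) (mprod X e) X \<and> meq (TT3 sc) (mprod e X) X \<and>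
     (\<forall>t\<in>TT2 sc. \<forall>w\<in>TT3 sc.
        fst X (fst (\<gamma> t) w) = fst (\<gamma> (fst m t)) w \<and>
        snd X (snd (\<gamma> t) w) = snd (\<gamma> (snd m t)) w)"

definition T1el :: "('k::field \<Rightarrow> 'a::ring \<Rightarrow> 'a) \<Rightarrow> ('a \<Rightarrow> ('k,'a) t2 mlt) \<Rightarrow> 'a \<Rightarrow> 'a \<Rightarrow> ('k,'a) t2" where
  "T1el sc \<Delta> a b = (THE s. s \<in> TT2 sc \<and>
        meq (TT2 sc) (mprod (\<Delta> a) (one_tens sc b)) (membed (mult2 sc) s))"

definition T2el :: "('k::field \<Rightarrow> 'a::ring \<Rightarrow> 'a) \<Rightarrow> ('a \<Rightarrow> ('k,'a) t2 mlt) \<Rightarrow> 'a \<Rightarrow> 'a \<Rightarrow> ('k,'a) t2" where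
  "T2el sc \<Delta> a b = (THE s. s \<in> TT2 sc \<and>
        meq (TT2 sc) (mprod (tens_one sc a) (\<Delta> b)) (membed (mult2 sc) s))"

definition T1 :: "('k::field \<Rightarrow> 'a::ring \<Rightarrow> 'a) \<Rightarrow> ('a \<Rightarrow> ('k,'a) t2 mlt) \<Rightarrow> ('k,'a) t2 \<Rightarrow> ('k,'a) t2" where
  "T1 sc \<Delta> = lift2 sc (T1el sc \<Delta>)"

definition T2 :: "('k::field \<Rightarrow> 'a::ring \<Rightarrow> 'a) \<Rightarrow> ('a \<Rightarrow> ('k,'a) t2 mlt) \<Rightarrow> ('k,'a) t2 \<Rightarrow> ('k,'a) t2" where
  "T2 sc \<Delta> = lift2 sc (T2el sc \<Delta>)"

section \<open>Weak multiplier bialgebras\<close>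

definition weak_multiplier_bialgebra ::
  "('k::field \<Rightarrow> 'a::ring \<Rightarrow> 'a) \<Rightarrow> ('k,'a) t2 mlt \<Rightarrow> ('a \<Rightarrow> ('k,'a) t2 mlt) \<Rightarrow> ('a \<Rightarrow> 'k) \<Rightarrow> bool" where
  "weak_multiplier_bialgebra sc E \<Delta> \<epsilon> \<longleftrightarrow>
     k_algebra sc \<and>
     \<comment> \<open>A idempotent: mu surjective\<close>
     (\<forall>c::'a. \<exists>(n::nat) a b. c = (\<Sum>i<n. a i * b i)) \<and>
     \<comment> \<open>non-degenerate multiplication\<close>
     (\<forall>b::'a. (\<forall>a. a * b = 0) \<longrightarrow> b = 0) \<and> (\<forall>b::'a. (\<forall>a. b * a = 0) \<longrightarrow> b = 0) \<and>
     \<comment> \<open>E idempotent element of M(A (x) A)\<close>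
     is_mlt (TT2 sc) fsc (mult2 sc) E \<and> meq (TT2 sc) (mprod E E) E \<and>
     \<comment> \<open>Delta : A -> M(A (x) A) multiplicative and linear\<close>
     (\<forall>a. is_mlt (TT2 sc) fsc (mult2 sc) (\<Delta> a)) \<and>
     (\<forall>a b. meq (TT2 sc) (\<Delta> (a * b)) (mprod (\<Delta> a) (\<Delta> b))) \<and>
     (\<forall>a b. meq (TT2 sc) (\<Delta> (a + b)) (madd (\<Delta> a) (\<Delta> b))) \<and>
     (\<forall>c a. meq (TT2 sc) (\<Delta> (sc c a)) (msc fsc c (\<Delta> a))) \<and>
     \<comment> \<open>epsilon linear\<close>
     lin_fun sc \<epsilon> \<and>
     \<comment> \<open>(i)\<close>
     (\<forall>a b. \<exists>s\<in>TT2 sc. meq (TT2 sc) (mprod (\<Delta> a) (one_tens sc b)) (membed (mult2 sc) s)) \<and>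
     (\<forall>a b. \<exists>s\<in>TT2 sc. meq (TT2 sc) (mprod (tens_one sc a) (\<Delta> b)) (membed (mult2 sc) s)) \<and>
     \<comment> \<open>(ii)\<close>
     (\<forall>w\<in>TT3 sc. tensor_id sc (T2 sc \<Delta>) (id_tensor sc (T1 sc \<Delta>) w)
                = id_tensor sc (T1 sc \<Delta>) (tensor_id sc (T2 sc \<Delta>) w)) \<and>
     \<comment> \<open>(iii)\<close>
     (\<forall>t\<in>TT2 sc. eps_id sc \<epsilon> (T1 sc \<Delta> t) = mu sc t \<and> id_eps sc \<epsilon> (T2 sc \<Delta> t) = mu sc t) \<and>
     \<comment> \<open>(iv)\<close>
     fspan {fst (\<Delta> a) (tens2 sc b b') | a b b'. True} = fspan {fst E (tens2 sc b b') | b b'. True} \<and>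
     fspan {snd (\<Delta> a) (tens2 sc b b') | a b b'. True} = fspan {snd E (tens2 sc b b') | b b'. True} \<and>
     \<comment> \<open>(v)\<close>
     (\<exists>X. ext_value sc (id_tens_Delta sc \<Delta>) (one_tens_E sc E) E X \<and>
          ext_value sc (Delta_tens_id sc \<Delta>) (E_tens_one sc E) E X \<and>
          meq (TT3 sc) (mprod (E_tens_one sc E) (one_tens_E sc E)) X \<and>
          meq (TT3 sc) (mprod (one_tens_E sc E) (E_tens_one sc E)) X) \<and>
     \<comment> \<open>(vi)\<close>
     (\<forall>a b c. eps_id sc \<epsilon> (fst (one_tens sc a) (fst E (tens2 sc b c)))
              = eps_id sc \<epsilon> (fst (\<Delta> a) (tens2 sc b c))) \<and>
     (\<forall>a b c. eps_id sc \<epsilon> (snd (one_tens sc c) (snd E (tens2 sc a b)))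
              = eps_id sc \<epsilon> (snd (\<Delta> c) (tens2 sc a b)))"

definition PiL :: "('k::field \<Rightarrow> 'a::ring \<Rightarrow> 'a) \<Rightarrow> ('k,'a) t2 mlt \<Rightarrow> ('a \<Rightarrow> ('k,'a) t2 mlt)
                    \<Rightarrow> ('a \<Rightarrow> 'k) \<Rightarrow> 'a \<Rightarrow> 'a mlt" where
  "PiL sc E \<Delta> \<epsilon> a = ((\<lambda>b. eps_id sc \<epsilon> (T2 sc \<Delta> (tens2 sc a b))),
                      (\<lambda>b. eps_id sc \<epsilon> (snd E (tens2 sc a b))))"

definition PiR :: "('k::field \<Rightarrow> 'a::ring \<Rightarrow> 'a) \<Rightarrow> ('k,'a) t2 mlt \<Rightarrow> ('a \<Rightarrow> ('k,'a) t2 mlt)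
                    \<Rightarrow> ('a \<Rightarrow> 'k) \<Rightarrow> 'a \<Rightarrow> 'a mlt" where
  "PiR sc E \<Delta> \<epsilon> a = ((\<lambda>b. id_eps sc \<epsilon> (fst E (tens2 sc b a))),
                      (\<lambda>b. id_eps sc \<epsilon> (T1 sc \<Delta> (tens2 sc b a))))"

end

theory Submission
  imports Defs "HOL.Vector_Spaces"
begin

text \<open>
  If E = 1, the second identity of (vi) and the counit axiom (id \<otimes> \<epsilon>)((a \<otimes> 1)\<Delta>(c)) = a c
  give \<epsilon>(x a c) = \<epsilon>(x a) \<epsilon>(c), and idempotency of A makes \<epsilon> multiplicative.
  Conversely, for multiplicative \<epsilon> the counit axioms and (vi) compute \<epsilon> \<otimes> id and id \<otimes> \<epsilon>
  on \<Delta>(a)(b \<otimes> c), on E(b \<otimes> c) and on the values of T1, T2 explicitly; in particular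
  \<sqinter>L(a) = \<epsilon>(a) 1 = \<sqinter>R(a).  Choosing p with \<epsilon>(p) = 1 and applying id \<otimes> \<epsilon> \<otimes> id to
  E3 (\<Delta>(x) \<otimes> y)(u \<otimes> p \<otimes> r), once through E3 = (\<Delta> \<otimes> id)(E) and once through
  E3 = (1 \<otimes> E)(E \<otimes> 1), shows that E(x \<otimes> y) and x \<otimes> y agree on every u \<otimes> r, so E = 1
  by non-degeneracy.  Each of \<sqinter>L(a) = \<epsilon>(a) 1 and \<sqinter>R(a) = \<epsilon>(a) 1 gives multiplicativity after
  applying \<epsilon>, because \<epsilon> \<circ> (\<epsilon> \<otimes> id) = \<epsilon> \<circ> (id \<otimes> \<epsilon>).
  When \<epsilon> = 0 the counit axiom forces all products, hence A, to vanish.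
\<close>

lemma vector_space_field: "vector_space ((*) :: 'k::field \<Rightarrow> 'k \<Rightarrow> 'k)"
  unfolding vector_space_def by (simp add: algebra_simps)

lemma sum_fun_apply: "(\<Sum>i\<in>I. (g i :: 'x \<Rightarrow> 'y::comm_monoid_add)) x = (\<Sum>i\<in>I. g i x)"
  by (induction I rule: infinite_finite_induct) auto

lemma sum_lessThan_add: "(\<Sum>i<n + (m::nat). (g i::'b::comm_monoid_add)) = (\<Sum>i<n. g i) + (\<Sum>i<m. g (n + i))"
  by (induction m) (auto simp: add.assoc)

locale k_alg =
  fixes sc :: "'k::field \<Rightarrow> 'a::ring \<Rightarrow> 'a"
  assumes k_algebra: "k_algebra sc"
begin

lemma sc_add_r: "sc c (x + y) = sc c x + sc c y" using k_algebra unfolding k_algebra_def by blast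
lemma sc_add_l: "sc (c + d) x = sc c x + sc d x" using k_algebra unfolding k_algebra_def by blast
lemma sc_sc: "sc c (sc d x) = sc (c * d) x" using k_algebra unfolding k_algebra_def by blast
lemma sc_one: "sc 1 x = x" using k_algebra unfolding k_algebra_def by blast
lemma sc_mult_l: "sc c (x * y) = sc c x * y" using k_algebra unfolding k_algebra_def by blast
lemma sc_mult_r: "sc c (x * y) = x * sc c y" using k_algebra unfolding k_algebra_def by blast

lemma vector_space_sc: "vector_space sc"
  unfolding vector_space_def using sc_add_r sc_add_l sc_sc sc_one by blast

sublocale V: vector_space sc by (rule vector_space_sc)

lemma sc_sum_r: "sc c (\<Sum>i\<in>I. f i) = (\<Sum>i\<in>I. sc c (f i))" by (rule V.scale_sum_right)

lemma lin_fun_linear: "lin_fun sc f \<longleftrightarrow> Vector_Spaces.linear sc (*) f"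
  unfolding lin_fun_def using linear_iff[of sc "(*)" f] vector_space_sc vector_space_field by blast

lemma lin_add: "lin_fun sc f \<Longrightarrow> f (x + y) = f x + f y" unfolding lin_fun_def by blast
lemma lin_sc: "lin_fun sc f \<Longrightarrow> f (sc c x) = c * f x" unfolding lin_fun_def by blast
lemma lin_zero: "lin_fun sc f \<Longrightarrow> f 0 = 0"
  using lin_sc[of f 0 0] by simp
lemma lin_minus: "lin_fun sc f \<Longrightarrow> f (- x) = - f x"
  using lin_add[of f x "-x"] lin_zero[of f] by (simp add: eq_neg_iff_add_eq_0 add.commute)
lemma lin_sum: "lin_fun sc f \<Longrightarrow> f (\<Sum>i\<in>I. g i) = (\<Sum>i\<in>I. f (g i))"
  by (induction I rule: infinite_finite_induct) (auto simp: lin_zero lin_add)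

definition basis where "basis = V.extend_basis {}"
definition coord where "coord x e = V.representation basis x e"

lemma independent_basis: "V.independent basis" unfolding basis_def by (rule V.independent_extend_basis) (rule V.independent_empty)
lemma span_basis: "V.span basis = UNIV" unfolding basis_def by (rule V.span_extend_basis) (rule V.independent_empty)

lemma lin_fun_coord: "lin_fun sc (\<lambda>x. coord x e)"
  unfolding lin_fun_linear coord_def by (rule V.linear_representation[OF independent_basis span_basis])

lemma coord_expansion:
  assumes "finite F" "{e. coord x e \<noteq> 0} \<subseteq> F"
  shows "(\<Sum>e\<in>F. sc (coord x e) e) = x"
proof -
  have "(\<Sum>e\<in>F. sc (coord x e) e) = (\<Sum>e | coord x e \<noteq> 0. sc (coord x e) e)"
    by (rule sum.mono_neutral_right) (use assms in auto)
  also have "\<dots> = x" unfolding coord_def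
    by (rule V.sum_nonzero_representation_eq[OF independent_basis]) (simp add: span_basis)
  finally show ?thesis .
qed

lemma finite_coord_support: "finite {e. coord x e \<noteq> 0}"
  unfolding coord_def by (rule V.finite_representation)

lemma eq_0_if_functionals_vanish: assumes "\<And>f. lin_fun sc f \<Longrightarrow> f x = 0" shows "x = 0"
proof -
  have "\<And>e. coord x e = 0" using assms[OF lin_fun_coord] .
  hence "{e. coord x e \<noteq> 0} = {}" by auto
  hence "x = (\<Sum>e\<in>{}. sc (coord x e) e)" using coord_expansion[of "{}" x] by simp
  thus ?thesis by simp
qed

lemma tens2_app: "lin_fun sc f \<Longrightarrow> lin_fun sc g \<Longrightarrow> tens2 sc a b (f, g) = f a * g b"
  unfolding tens2_def by simp

lemma tens2_add_l: "tens2 sc (a + a') b = tens2 sc a b + tens2 sc a' b"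
  unfolding tens2_def by (auto simp: fun_eq_iff lin_add algebra_simps)
lemma tens2_add_r: "tens2 sc a (b + b') = tens2 sc a b + tens2 sc a b'"
  unfolding tens2_def by (auto simp: fun_eq_iff lin_add algebra_simps)
lemma tens2_sc_l: "tens2 sc (sc c a) b = fsc c (tens2 sc a b)"
  unfolding tens2_def fsc_def by (auto simp: fun_eq_iff lin_sc algebra_simps)
lemma tens2_sc_r: "tens2 sc a (sc c b) = fsc c (tens2 sc a b)"
  unfolding tens2_def fsc_def by (auto simp: fun_eq_iff lin_sc algebra_simps)
lemma tens2_zero_l[simp]: "tens2 sc 0 b = 0"
  unfolding tens2_def by (auto simp: fun_eq_iff lin_zero)
lemma tens2_minus_l: "tens2 sc (- a) b = - tens2 sc a b"
  unfolding tens2_def by (auto simp: fun_eq_iff lin_minus)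

lemma tens3_app: "lin_fun sc f \<Longrightarrow> lin_fun sc g \<Longrightarrow> lin_fun sc h \<Longrightarrow>
   tens3 sc a b c (f, g, h) = f a * g b * h c"
  unfolding tens3_def by simp
lemma tens3_add_1: "tens3 sc (a + a') b c = tens3 sc a b c + tens3 sc a' b c"
  unfolding tens3_def by (auto simp: fun_eq_iff lin_add algebra_simps)
lemma tens3_add_2: "tens3 sc a (b + b') c = tens3 sc a b c + tens3 sc a b' c"
  unfolding tens3_def by (auto simp: fun_eq_iff lin_add algebra_simps)
lemma tens3_add_3: "tens3 sc a b (c + c') = tens3 sc a b c + tens3 sc a b c'"
  unfolding tens3_def by (auto simp: fun_eq_iff lin_add algebra_simps)
lemma tens3_sc_1: "tens3 sc (sc k a) b c = fsc k (tens3 sc a b c)"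
  unfolding tens3_def fsc_def by (auto simp: fun_eq_iff lin_sc algebra_simps)
lemma tens3_sc_2: "tens3 sc a (sc k b) c = fsc k (tens3 sc a b c)"
  unfolding tens3_def fsc_def by (auto simp: fun_eq_iff lin_sc algebra_simps)
lemma tens3_sc_3: "tens3 sc a b (sc k c) = fsc k (tens3 sc a b c)"
  unfolding tens3_def fsc_def by (auto simp: fun_eq_iff lin_sc algebra_simps)
lemma tens3_minus_1: "tens3 sc (- a) b c = - tens3 sc a b c"
  unfolding tens3_def by (auto simp: fun_eq_iff lin_minus)

section \<open>Maps out of tensor products\<close>

definition balanced :: "('a \<Rightarrow> 'a \<Rightarrow> 'b::ab_group_add) \<Rightarrow> bool" where
  "balanced \<beta> \<longleftrightarrow> (\<forall>a a' b. \<beta> (a + a') b = \<beta> a b + \<beta> a' b) \<and>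
             (\<forall>a b b'. \<beta> a (b + b') = \<beta> a b + \<beta> a b') \<and>
             (\<forall>c a b. \<beta> (sc c a) b = \<beta> a (sc c b))"

lemma balancedI:
  assumes "\<And>a a' b. \<beta> (a + a') b = \<beta> a b + \<beta> a' b"
    "\<And>a b b'. \<beta> a (b + b') = \<beta> a b + \<beta> a b'"
    "\<And>c a b. \<beta> (sc c a) b = \<beta> a (sc c b)"
  shows "balanced \<beta>" unfolding balanced_def using assms by blast

lemma balanced_sum_left:
  assumes "balanced \<beta>" shows "\<beta> (\<Sum>i\<in>I. g i) b = (\<Sum>i\<in>I. \<beta> (g i) b)"
proof -
  have z: "\<beta> 0 b = 0" using assms unfolding balanced_def by (metis add_0 add_cancel_right_left)
  show ?thesis using assms unfolding balanced_def
    by (induction I rule: infinite_finite_induct) (auto simp: z)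
qed

lemma balanced_sum_right:
  assumes "balanced \<beta>" shows "\<beta> a (\<Sum>i\<in>I. g i) = (\<Sum>i\<in>I. \<beta> a (g i))"
proof -
  have z: "\<beta> a 0 = 0" using assms unfolding balanced_def by (metis add_0 add_cancel_right_left)
  show ?thesis using assms unfolding balanced_def
    by (induction I rule: infinite_finite_induct) (auto simp: z)
qed

lemma balanced_tens2: "balanced (tens2 sc)"
  by (rule balancedI) (simp_all add: tens2_add_l tens2_add_r tens2_sc_l tens2_sc_r)

text \<open>Expanding the second factors in a basis, the coordinate functionals show that
  each first-factor coefficient vanishes.\<close>

lemma balanced_sum_eq_0:
  assumes b: "balanced \<beta>" and z: "(\<Sum>i<(n::nat). tens2 sc (a i) (b i)) = 0"
  shows "(\<Sum>i<n. \<beta> (a i) (b i)) = 0"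
proof -
  define F where "F = (\<Union>i<n. {e. coord (b i) e \<noteq> 0})"
  have fF: "finite F" unfolding F_def by (intro finite_UN_I finite_coord_support) simp
  have exp: "b i = (\<Sum>e\<in>F. sc (coord (b i) e) e)" if "i < n" for i
    by (rule coord_expansion[symmetric]) (use fF that in \<open>auto simp: F_def\<close>)
  have coef: "(\<Sum>i<n. sc (coord (b i) e) (a i)) = 0" for e
  proof (rule eq_0_if_functionals_vanish)
    fix f assume f: "lin_fun sc f"
    have "f (\<Sum>i<n. sc (coord (b i) e) (a i)) = (\<Sum>i<n. f (a i) * coord (b i) e)"
      by (simp add: lin_sum[OF f] lin_sc[OF f] mult.commute)
    also have "\<dots> = (\<Sum>i<n. tens2 sc (a i) (b i)) (f, \<lambda>x. coord x e)"
      by (simp add: sum_fun_apply tens2_app[OF f lin_fun_coord])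
    also have "\<dots> = 0" using z by simp
    finally show "f (\<Sum>i<n. sc (coord (b i) e) (a i)) = 0" .
  qed
  have bal: "\<beta> (sc c x) y = \<beta> x (sc c y)" for c x y using b unfolding balanced_def by blast
  have "(\<Sum>i<n. \<beta> (a i) (b i)) = (\<Sum>i<n. \<Sum>e\<in>F. \<beta> (sc (coord (b i) e) (a i)) e)"
  proof (rule sum.cong[OF refl])
    fix i assume "i \<in> {..<n}"
    hence "\<beta> (a i) (b i) = \<beta> (a i) (\<Sum>e\<in>F. sc (coord (b i) e) e)" using exp by simp
    also have "\<dots> = (\<Sum>e\<in>F. \<beta> (sc (coord (b i) e) (a i)) e)"
      by (simp add: balanced_sum_right[OF b] bal)
    finally show "\<beta> (a i) (b i) = (\<Sum>e\<in>F. \<beta> (sc (coord (b i) e) (a i)) e)" .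
  qed
  also have "\<dots> = (\<Sum>e\<in>F. \<Sum>i<n. \<beta> (sc (coord (b i) e) (a i)) e)" by (rule sum.swap)
  also have "\<dots> = (\<Sum>e\<in>F. \<beta> (\<Sum>i<n. sc (coord (b i) e) (a i)) e)"
    by (simp add: balanced_sum_left[OF b])
  also have "\<dots> = (\<Sum>e\<in>F. \<beta> 0 e)" by (simp add: coef)
  also have "\<dots> = 0" using balanced_sum_left[OF b, of "\<lambda>i. 0" "{}"] by simp
  finally show ?thesis .
qed

lemma balanced_sum_cong:
  assumes b: "balanced \<beta>"
    and eq: "(\<Sum>i<(n::nat). tens2 sc (a i) (b i)) = (\<Sum>i<(m::nat). tens2 sc (c i) (d i))"
  shows "(\<Sum>i<n. \<beta> (a i) (b i)) = (\<Sum>i<m. \<beta> (c i) (d i))"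
proof -
  define a2 where "a2 i = (if i < n then a i else - c (i - n))" for i
  define b2 where "b2 i = (if i < n then b i else d (i - n))" for i
  have neg: "\<beta> (- x) y = - \<beta> x y" for x y
  proof -
    have z: "\<beta> 0 y = 0" using balanced_sum_left[OF b, of "\<lambda>i. 0" "{}"] by simp
    have "\<beta> (x + - x) y = \<beta> x y + \<beta> (- x) y" using b unfolding balanced_def by blast
    thus ?thesis using z by (simp add: eq_neg_iff_add_eq_0 add.commute)
  qed
  have "(\<Sum>i<n + m. tens2 sc (a2 i) (b2 i)) = (\<Sum>i<n. tens2 sc (a i) (b i)) - (\<Sum>i<m. tens2 sc (c i) (d i))"
    unfolding sum_lessThan_add a2_def b2_def by (simp add: tens2_minus_l sum_negf)
  hence "(\<Sum>i<n + m. \<beta> (a2 i) (b2 i)) = 0" using eq by (intro balanced_sum_eq_0[OF b]) simp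
  hence "(\<Sum>i<n. \<beta> (a i) (b i)) - (\<Sum>i<m. \<beta> (c i) (d i)) = 0"
    unfolding sum_lessThan_add a2_def b2_def by (simp add: neg sum_negf)
  thus ?thesis by simp
qed

lemma lift2_sum:
  assumes b: "balanced \<beta>"
  shows "lift2 sc \<beta> (\<Sum>i<(n::nat). tens2 sc (a i) (b i)) = (\<Sum>i<n. \<beta> (a i) (b i))"
  unfolding lift2_def
proof (rule someI2)
  show "\<exists>n' a' b'. (\<Sum>i<n. tens2 sc (a i) (b i)) = (\<Sum>i<(n'::nat). tens2 sc (a' i) (b' i)) \<and>
          (\<Sum>i<n. \<beta> (a i) (b i)) = (\<Sum>i<n'. \<beta> (a' i) (b' i))" by (intro exI[of _ n] exI[of _ a] exI[of _ b] conjI refl)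
next
  fix v assume "\<exists>n' a' b'. (\<Sum>i<n. tens2 sc (a i) (b i)) = (\<Sum>i<(n'::nat). tens2 sc (a' i) (b' i)) \<and>
          v = (\<Sum>i<n'. \<beta> (a' i) (b' i))"
  then obtain n' a' b' where e1: "(\<Sum>i<n. tens2 sc (a i) (b i)) = (\<Sum>i<(n'::nat). tens2 sc (a' i) (b' i))"
     and e2: "v = (\<Sum>i<n'. \<beta> (a' i) (b' i))" by blast
  show "v = (\<Sum>i<n. \<beta> (a i) (b i))" unfolding e2 using balanced_sum_cong[OF b e1] by simp
qed

lemma lift2_tens2: "balanced \<beta> \<Longrightarrow> lift2 sc \<beta> (tens2 sc a b) = \<beta> a b"
proof -
  assume b: "balanced \<beta>"
  have "tens2 sc a b = (\<Sum>i<(1::nat). tens2 sc ((\<lambda>_. a) i) ((\<lambda>_. b) i))" by simp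
  thus ?thesis using lift2_sum[OF b, where n=1 and a="\<lambda>_. a" and b="\<lambda>_. b"] by simp
qed

definition balanced3 :: "('a \<Rightarrow> 'a \<Rightarrow> 'a \<Rightarrow> 'b::ab_group_add) \<Rightarrow> bool" where
  "balanced3 \<beta> \<longleftrightarrow> (\<forall>a a' b d. \<beta> (a + a') b d = \<beta> a b d + \<beta> a' b d) \<and>
             (\<forall>a b b' d. \<beta> a (b + b') d = \<beta> a b d + \<beta> a b' d) \<and>
             (\<forall>a b d d'. \<beta> a b (d + d') = \<beta> a b d + \<beta> a b d') \<and>
             (\<forall>c a b d. \<beta> (sc c a) b d = \<beta> a (sc c b) d) \<and>
             (\<forall>c a b d. \<beta> a (sc c b) d = \<beta> a b (sc c d))"

lemma balanced3I:
  assumes "\<And>a a' b d. \<beta> (a + a') b d = \<beta> a b d + \<beta> a' b d"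
    "\<And>a b b' d. \<beta> a (b + b') d = \<beta> a b d + \<beta> a b' d"
    "\<And>a b d d'. \<beta> a b (d + d') = \<beta> a b d + \<beta> a b d'"
    "\<And>c a b d. \<beta> (sc c a) b d = \<beta> a (sc c b) d"
    "\<And>c a b d. \<beta> a (sc c b) d = \<beta> a b (sc c d)"
  shows "balanced3 \<beta>" unfolding balanced3_def using assms by blast

lemma balanced3_balanced12: "balanced3 \<beta> \<Longrightarrow> balanced (\<lambda>x y. \<beta> x y e)"
  unfolding balanced3_def balanced_def by blast
lemma balanced3_balanced23: "balanced3 \<beta> \<Longrightarrow> balanced (\<lambda>y z. \<beta> x y z)"
  unfolding balanced3_def balanced_def by blast

lemma balanced3_sum_eq_0:
  assumes b: "balanced3 \<beta>" and z: "(\<Sum>i<(n::nat). tens3 sc (a i) (b i) (c i)) = 0"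
  shows "(\<Sum>i<n. \<beta> (a i) (b i) (c i)) = 0"
proof -
  define F where "F = (\<Union>i<n. {e. coord (c i) e \<noteq> 0})"
  have fF: "finite F" unfolding F_def by (intro finite_UN_I finite_coord_support) simp
  have exp: "c i = (\<Sum>e\<in>F. sc (coord (c i) e) e)" if "i < n" for i
    by (rule coord_expansion[symmetric]) (use fF that in \<open>auto simp: F_def\<close>)
  have coef: "(\<Sum>i<n. \<beta> (sc (coord (c i) e) (a i)) (b i) e) = 0" for e
  proof (rule balanced_sum_eq_0[OF balanced3_balanced12[OF b]])
    show "(\<Sum>i<n. tens2 sc (sc (coord (c i) e) (a i)) (b i)) = 0"
    proof
      fix p :: "('a \<Rightarrow> 'k) \<times> ('a \<Rightarrow> 'k)"
      obtain f g where p: "p = (f, g)" by (cases p)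
      show "(\<Sum>i<n. tens2 sc (sc (coord (c i) e) (a i)) (b i)) p = 0 p"
      proof (cases "lin_fun sc f \<and> lin_fun sc g")
        case True
        hence "(\<Sum>i<n. tens2 sc (sc (coord (c i) e) (a i)) (b i)) p
             = (\<Sum>i<n. tens3 sc (a i) (b i) (c i)) (f, g, \<lambda>x. coord x e)"
          by (simp add: p sum_fun_apply tens2_app tens3_app lin_fun_coord lin_sc algebra_simps)
        thus ?thesis using z by simp
      next
        case False thus ?thesis by (auto simp: p sum_fun_apply tens2_def)
      qed
    qed
  qed
  have t3: "\<beta> x y (\<Sum>e\<in>F. g e) = (\<Sum>e\<in>F. \<beta> x y (g e))" for x y g
    using balanced_sum_right[OF balanced3_balanced23[OF b]] .
  have bal: "\<beta> x y (sc r e) = \<beta> (sc r x) y e" for x y r e using b unfolding balanced3_def by metis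
  have "(\<Sum>i<n. \<beta> (a i) (b i) (c i)) = (\<Sum>i<n. \<Sum>e\<in>F. \<beta> (sc (coord (c i) e) (a i)) (b i) e)"
  proof (rule sum.cong[OF refl])
    fix i assume "i \<in> {..<n}"
    hence "\<beta> (a i) (b i) (c i) = \<beta> (a i) (b i) (\<Sum>e\<in>F. sc (coord (c i) e) e)" using exp by simp
    also have "\<dots> = (\<Sum>e\<in>F. \<beta> (sc (coord (c i) e) (a i)) (b i) e)"
      by (simp add: t3 bal)
    finally show "\<beta> (a i) (b i) (c i) = (\<Sum>e\<in>F. \<beta> (sc (coord (c i) e) (a i)) (b i) e)" .
  qed
  also have "\<dots> = (\<Sum>e\<in>F. \<Sum>i<n. \<beta> (sc (coord (c i) e) (a i)) (b i) e)" by (rule sum.swap)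
  also have "\<dots> = 0" by (simp add: coef)
  finally show ?thesis .
qed

lemma balanced3_sum_cong:
  assumes b: "balanced3 \<beta>"
    and eq: "(\<Sum>i<(n::nat). tens3 sc (a i) (b i) (c i)) = (\<Sum>i<(m::nat). tens3 sc (a' i) (b' i) (c' i))"
  shows "(\<Sum>i<n. \<beta> (a i) (b i) (c i)) = (\<Sum>i<m. \<beta> (a' i) (b' i) (c' i))"
proof -
  define a2 where "a2 i = (if i < n then a i else - a' (i - n))" for i
  define b2 where "b2 i = (if i < n then b i else b' (i - n))" for i
  define c2 where "c2 i = (if i < n then c i else c' (i - n))" for i
  have neg: "\<beta> (- x) y z = - \<beta> x y z" for x y z
  proof -
    have z: "\<beta> 0 y z = 0" using balanced_sum_left[OF balanced3_balanced12[OF b], of "\<lambda>i. 0" "{}"] by simp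
    have "\<beta> (x + - x) y z = \<beta> x y z + \<beta> (- x) y z" using b unfolding balanced3_def by blast
    thus ?thesis using z by (simp add: eq_neg_iff_add_eq_0 add.commute)
  qed
  have "(\<Sum>i<n + m. tens3 sc (a2 i) (b2 i) (c2 i)) = (\<Sum>i<n. tens3 sc (a i) (b i) (c i)) - (\<Sum>i<m. tens3 sc (a' i) (b' i) (c' i))"
    unfolding sum_lessThan_add a2_def b2_def c2_def by (simp add: tens3_minus_1 sum_negf)
  hence "(\<Sum>i<n + m. \<beta> (a2 i) (b2 i) (c2 i)) = 0" using eq by (intro balanced3_sum_eq_0[OF b]) simp
  hence "(\<Sum>i<n. \<beta> (a i) (b i) (c i)) - (\<Sum>i<m. \<beta> (a' i) (b' i) (c' i)) = 0"
    unfolding sum_lessThan_add a2_def b2_def c2_def by (simp add: neg sum_negf)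
  thus ?thesis by simp
qed

lemma lift3_sum:
  assumes b: "balanced3 \<beta>"
  shows "lift3 sc \<beta> (\<Sum>i<(n::nat). tens3 sc (a i) (b i) (c i)) = (\<Sum>i<n. \<beta> (a i) (b i) (c i))"
  unfolding lift3_def
proof (rule someI2)
  show "\<exists>n' a' b' c'. (\<Sum>i<n. tens3 sc (a i) (b i) (c i)) = (\<Sum>i<(n'::nat). tens3 sc (a' i) (b' i) (c' i)) \<and>
          (\<Sum>i<n. \<beta> (a i) (b i) (c i)) = (\<Sum>i<n'. \<beta> (a' i) (b' i) (c' i))"
    by (intro exI[of _ n] exI[of _ a] exI[of _ b] exI[of _ c] conjI refl)
next
  fix v assume "\<exists>n' a' b' c'. (\<Sum>i<n. tens3 sc (a i) (b i) (c i)) = (\<Sum>i<(n'::nat). tens3 sc (a' i) (b' i) (c' i)) \<and>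
          v = (\<Sum>i<n'. \<beta> (a' i) (b' i) (c' i))"
  then obtain n' a' b' c' where e1: "(\<Sum>i<n. tens3 sc (a i) (b i) (c i)) = (\<Sum>i<(n'::nat). tens3 sc (a' i) (b' i) (c' i))"
     and e2: "v = (\<Sum>i<n'. \<beta> (a' i) (b' i) (c' i))" by blast
  show "v = (\<Sum>i<n. \<beta> (a i) (b i) (c i))" unfolding e2 using balanced3_sum_cong[OF b e1] by simp
qed

lemma lift3_tens3: "balanced3 \<beta> \<Longrightarrow> lift3 sc \<beta> (tens3 sc a b c) = \<beta> a b c"
proof -
  assume b: "balanced3 \<beta>"
  have "tens3 sc a b c = (\<Sum>i<(1::nat). tens3 sc ((\<lambda>_. a) i) ((\<lambda>_. b) i) ((\<lambda>_. c) i))" by simp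
  thus ?thesis using lift3_sum[OF b, where n=1 and a="\<lambda>_. a" and b="\<lambda>_. b" and c="\<lambda>_. c"] by simp
qed

abbreviation "T \<equiv> TT2 sc"
abbreviation "T3 \<equiv> TT3 sc"

lemma TT2E: assumes "s \<in> T" obtains n a b where "s = (\<Sum>i<(n::nat). tens2 sc (a i) (b i))"
  using assms unfolding TT2_def by blast
lemma TT2I: "(\<Sum>i<(n::nat). tens2 sc (a i) (b i)) \<in> T"
  unfolding TT2_def by blast
lemma TT3E: assumes "s \<in> T3" obtains n a b c where "s = (\<Sum>i<(n::nat). tens3 sc (a i) (b i) (c i))"
  using assms unfolding TT3_def by blast
lemma TT3I: "(\<Sum>i<(n::nat). tens3 sc (a i) (b i) (c i)) \<in> T3"
  unfolding TT3_def by blast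

lemma tens2_T: "tens2 sc a b \<in> T"
  using TT2I[where n=1 and a="\<lambda>_. a" and b="\<lambda>_. b"] by simp
lemma tens3_T: "tens3 sc a b c \<in> T3"
  using TT3I[where n=1 and a="\<lambda>_. a" and b="\<lambda>_. b" and c="\<lambda>_. c"] by simp
lemma zero_T: "0 \<in> T"
  using TT2I[where n=0] by simp
lemma zero_T3: "0 \<in> T3"
  using TT3I[where n=0] by simp

lemma add_T: assumes "s \<in> T" "t \<in> T" shows "s + t \<in> T"
proof -
  obtain n a b where s: "s = (\<Sum>i<(n::nat). tens2 sc (a i) (b i))" using assms(1) by (rule TT2E)
  obtain m c d where t: "t = (\<Sum>i<(m::nat). tens2 sc (c i) (d i))" using assms(2) by (rule TT2E)
  define a2 where "a2 i = (if i < n then a i else c (i - n))" for i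
  define b2 where "b2 i = (if i < n then b i else d (i - n))" for i
  have "s + t = (\<Sum>i<n + m. tens2 sc (a2 i) (b2 i))"
    unfolding sum_lessThan_add a2_def b2_def s t by simp
  thus ?thesis using TT2I by simp
qed

lemma add_T3: assumes "s \<in> T3" "t \<in> T3" shows "s + t \<in> T3"
proof -
  obtain n a b c where s: "s = (\<Sum>i<(n::nat). tens3 sc (a i) (b i) (c i))" using assms(1) by (rule TT3E)
  obtain m a' b' c' where t: "t = (\<Sum>i<(m::nat). tens3 sc (a' i) (b' i) (c' i))" using assms(2) by (rule TT3E)
  define a2 where "a2 i = (if i < n then a i else a' (i - n))" for i
  define b2 where "b2 i = (if i < n then b i else b' (i - n))" for i
  define c2 where "c2 i = (if i < n then c i else c' (i - n))" for i
  have "s + t = (\<Sum>i<n + m. tens3 sc (a2 i) (b2 i) (c2 i))"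
    unfolding sum_lessThan_add a2_def b2_def c2_def s t by simp
  thus ?thesis using TT3I by simp
qed

lemma sum_T: "(\<And>i. i \<in> I \<Longrightarrow> g i \<in> T) \<Longrightarrow> (\<Sum>i\<in>I. g i) \<in> T"
  by (induction I rule: infinite_finite_induct) (auto simp: zero_T add_T)
lemma sum_T3: "(\<And>i. i \<in> I \<Longrightarrow> g i \<in> T3) \<Longrightarrow> (\<Sum>i\<in>I. g i) \<in> T3"
  by (induction I rule: infinite_finite_induct) (auto simp: zero_T3 add_T3)

lemma fsc_add: "fsc c (x + y) = fsc c x + fsc c y"
  unfolding fsc_def by (simp add: fun_eq_iff algebra_simps)
lemma fsc_zero[simp]: "fsc c 0 = 0" unfolding fsc_def by (simp add: fun_eq_iff)
lemma fsc_0[simp]: "fsc 0 x = 0" unfolding fsc_def by (simp add: fun_eq_iff)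
lemma fsc_1[simp]: "fsc 1 x = x" unfolding fsc_def by (simp add: fun_eq_iff)
lemma fsc_sum: "fsc c (\<Sum>i\<in>I. g i) = (\<Sum>i\<in>I. fsc c (g i))"
proof (induction I rule: infinite_finite_induct)
  case (insert x F) then show ?case by (simp only: sum.insert[OF insert(1,2)] fsc_add)
next
  case (infinite A) then show ?case by (simp only: sum.infinite[OF infinite] fsc_zero)
qed (simp only: sum.empty fsc_zero)
lemma fsc_fsc: "fsc c (fsc d x) = fsc (c * d) x" unfolding fsc_def by (simp add: fun_eq_iff)

lemma fsc_T: assumes "s \<in> T" shows "fsc c s \<in> T"
proof -
  obtain n a b where s: "s = (\<Sum>i<(n::nat). tens2 sc (a i) (b i))" using assms by (rule TT2E)
  have "fsc c s = (\<Sum>i<n. tens2 sc (sc c (a i)) (b i))" unfolding s fsc_sum by (simp add: tens2_sc_l)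
  thus ?thesis using TT2I by simp
qed

lemma minus_T: "s \<in> T \<Longrightarrow> - s \<in> T"
proof -
  assume "s \<in> T"
  moreover have "fsc (-1) s = - s" unfolding fsc_def by (simp add: fun_eq_iff)
  ultimately show ?thesis using fsc_T[of s "-1"] by simp
qed
lemma diff_T: "s \<in> T \<Longrightarrow> t \<in> T \<Longrightarrow> s - t \<in> T"
  using add_T minus_T by (metis diff_conv_add_uminus)

lemma lift2_zero: "balanced \<beta> \<Longrightarrow> lift2 sc \<beta> 0 = 0"
  using lift2_sum[of \<beta>, where n=0] by simp

lemma lift2_add: assumes b: "balanced \<beta>" and "s \<in> T" "t \<in> T"
  shows "lift2 sc \<beta> (s + t) = lift2 sc \<beta> s + lift2 sc \<beta> t"
proof -
  obtain n a b where s: "s = (\<Sum>i<(n::nat). tens2 sc (a i) (b i))" using assms(2) by (rule TT2E)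
  obtain m c d where t: "t = (\<Sum>i<(m::nat). tens2 sc (c i) (d i))" using assms(3) by (rule TT2E)
  define a2 where "a2 i = (if i < n then a i else c (i - n))" for i
  define b2 where "b2 i = (if i < n then b i else d (i - n))" for i
  have "s + t = (\<Sum>i<n + m. tens2 sc (a2 i) (b2 i))"
    unfolding sum_lessThan_add a2_def b2_def s t by simp
  hence "lift2 sc \<beta> (s + t) = (\<Sum>i<n + m. \<beta> (a2 i) (b2 i))" by (simp add: lift2_sum[OF b])
  also have "\<dots> = lift2 sc \<beta> s + lift2 sc \<beta> t"
    unfolding sum_lessThan_add s t lift2_sum[OF b] a2_def b2_def by simp
  finally show ?thesis .
qed

lemma lift2_sumT: assumes b: "balanced \<beta>" shows "(\<And>i. i \<in> I \<Longrightarrow> g i \<in> T) \<Longrightarrow>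
    lift2 sc \<beta> (\<Sum>i\<in>I. g i) = (\<Sum>i\<in>I. lift2 sc \<beta> (g i))"
proof (induction I rule: infinite_finite_induct)
  case (insert x F)
  have "lift2 sc \<beta> (\<Sum>i\<in>insert x F. g i) = lift2 sc \<beta> (g x + (\<Sum>i\<in>F. g i))"
    by (simp only: sum.insert[OF insert(1,2)])
  also have "\<dots> = lift2 sc \<beta> (g x) + lift2 sc \<beta> (\<Sum>i\<in>F. g i)"
    by (rule lift2_add[OF b]) (use insert in \<open>auto intro: sum_T\<close>)
  finally show ?case using insert(3,4) by (simp only: sum.insert[OF insert(1,2)]) simp
qed (simp_all add: lift2_zero[OF b])

lemma lift3_zero: "balanced3 \<beta> \<Longrightarrow> lift3 sc \<beta> 0 = 0"
  using lift3_sum[of \<beta>, where n=0] by simp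

lemma lift3_add: assumes b: "balanced3 \<beta>" and "s \<in> T3" "t \<in> T3"
  shows "lift3 sc \<beta> (s + t) = lift3 sc \<beta> s + lift3 sc \<beta> t"
proof -
  obtain n a b c where s: "s = (\<Sum>i<(n::nat). tens3 sc (a i) (b i) (c i))" using assms(2) by (rule TT3E)
  obtain m a' b' c' where t: "t = (\<Sum>i<(m::nat). tens3 sc (a' i) (b' i) (c' i))" using assms(3) by (rule TT3E)
  define a2 where "a2 i = (if i < n then a i else a' (i - n))" for i
  define b2 where "b2 i = (if i < n then b i else b' (i - n))" for i
  define c2 where "c2 i = (if i < n then c i else c' (i - n))" for i
  have "s + t = (\<Sum>i<n + m. tens3 sc (a2 i) (b2 i) (c2 i))"
    unfolding sum_lessThan_add a2_def b2_def c2_def s t by simp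
  hence "lift3 sc \<beta> (s + t) = (\<Sum>i<n + m. \<beta> (a2 i) (b2 i) (c2 i))" by (simp add: lift3_sum[OF b])
  also have "\<dots> = lift3 sc \<beta> s + lift3 sc \<beta> t"
    unfolding sum_lessThan_add s t lift3_sum[OF b] a2_def b2_def c2_def by simp
  finally show ?thesis .
qed

lemma lift3_sumT: assumes b: "balanced3 \<beta>" shows "(\<And>i. i \<in> I \<Longrightarrow> g i \<in> T3) \<Longrightarrow>
    lift3 sc \<beta> (\<Sum>i\<in>I. g i) = (\<Sum>i\<in>I. lift3 sc \<beta> (g i))"
proof (induction I rule: infinite_finite_induct)
  case (insert x F)
  have "lift3 sc \<beta> (\<Sum>i\<in>insert x F. g i) = lift3 sc \<beta> (g x + (\<Sum>i\<in>F. g i))"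
    by (simp only: sum.insert[OF insert(1,2)])
  also have "\<dots> = lift3 sc \<beta> (g x) + lift3 sc \<beta> (\<Sum>i\<in>F. g i)"
    by (rule lift3_add[OF b]) (use insert in \<open>auto intro: sum_T3\<close>)
  finally show ?case using insert(3,4) by (simp only: sum.insert[OF insert(1,2)]) simp
qed (simp_all add: lift3_zero[OF b])

lemma balanced_mult: "balanced (\<lambda>a b. a * b)"
  by (rule balancedI) (simp_all add: algebra_simps sc_mult_l[symmetric] sc_mult_r[symmetric])

lemma balanced_tens2_mult: "balanced (\<lambda>c d. tens2 sc (a * c) (b * d))"
  by (rule balancedI) (simp_all add: distrib_left tens2_add_l tens2_add_r sc_mult_r[symmetric] tens2_sc_l tens2_sc_r)

lemma mult2_sum: "mult2 sc (\<Sum>i<(n::nat). tens2 sc (a i) (b i)) (\<Sum>j<(m::nat). tens2 sc (c j) (d j))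
   = (\<Sum>i<n. \<Sum>j<m. tens2 sc (a i * c j) (b i * d j))"
proof -
  have e: "(\<lambda>x y. lift2 sc (\<lambda>c' d'. tens2 sc (x * c') (y * d')) (\<Sum>j<m. tens2 sc (c j) (d j)))
      = (\<lambda>x y. \<Sum>j<m. tens2 sc (x * c j) (y * d j))"
    by (simp add: lift2_sum[OF balanced_tens2_mult])
  have b: "balanced (\<lambda>x y. \<Sum>j<m. tens2 sc (x * c j) (y * d j))"
    by (rule balancedI) (simp_all add: distrib_right tens2_add_l tens2_add_r sum.distrib
        sc_mult_l[symmetric] tens2_sc_l tens2_sc_r)
  show ?thesis unfolding mult2_def e lift2_sum[OF b] ..
qed

lemma mult2_T: "s \<in> T \<Longrightarrow> t \<in> T \<Longrightarrow> mult2 sc s t \<in> T"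
  by (erule TT2E, erule TT2E) (simp add: mult2_sum tens2_T sum_T)

lemma mult2_tens2: "mult2 sc (tens2 sc a b) (tens2 sc c d) = tens2 sc (a * c) (b * d)"
  using mult2_sum[where n=1 and m=1 and a="\<lambda>_. a" and b="\<lambda>_. b" and c="\<lambda>_. c" and d="\<lambda>_. d"] by simp

lemma mult2_sum_r: "mult2 sc (\<Sum>i<(n::nat). tens2 sc (a i) (b i)) (tens2 sc c d)
   = (\<Sum>i<n. tens2 sc (a i * c) (b i * d))"
  using mult2_sum[where m=1 and c="\<lambda>_. c" and d="\<lambda>_. d"] by simp
lemma mult2_sum_l: "mult2 sc (tens2 sc c d) (\<Sum>i<(n::nat). tens2 sc (a i) (b i))
   = (\<Sum>i<n. tens2 sc (c * a i) (d * b i))"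
  using mult2_sum[where n=1 and a="\<lambda>_. c" and b="\<lambda>_. d" and m=n and c=a and d=b] by simp

lemma balanced_scale_left: "lin_fun sc f \<Longrightarrow> balanced (\<lambda>p q. sc (f p) q)"
  by (rule balancedI) (simp_all add: lin_add lin_sc sc_add_l sc_add_r sc_sc mult.commute)
lemma balanced_scale_right: "lin_fun sc f \<Longrightarrow> balanced (\<lambda>p q. sc (f q) p)"
  by (rule balancedI) (simp_all add: lin_add lin_sc sc_add_l sc_add_r sc_sc mult.commute)

lemma sum_scale_mult_right: "(\<Sum>i\<in>I. sc (c i) (x i)) * r = (\<Sum>i\<in>I. sc (c i) (x i * r))"
  by (simp add: sum_distrib_right sc_mult_l)

definition tlinear :: "(('k,'a) t2 \<Rightarrow> ('k,'a) t2) \<Rightarrow> bool" where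
  "tlinear F \<longleftrightarrow> (\<forall>s\<in>T. F s \<in> T) \<and> (\<forall>s\<in>T. \<forall>t\<in>T. F (s + t) = F s + F t) \<and>
     (\<forall>c. \<forall>s\<in>T. F (fsc c s) = fsc c (F s))"

lemma tlinear_T: "tlinear F \<Longrightarrow> s \<in> T \<Longrightarrow> F s \<in> T" unfolding tlinear_def by blast
lemma tlinear_add: "tlinear F \<Longrightarrow> s \<in> T \<Longrightarrow> t \<in> T \<Longrightarrow> F (s + t) = F s + F t" unfolding tlinear_def by blast
lemma tlinear_fsc: "tlinear F \<Longrightarrow> s \<in> T \<Longrightarrow> F (fsc c s) = fsc c (F s)" unfolding tlinear_def by blast
lemma tlinear_zero: "tlinear F \<Longrightarrow> F 0 = 0"
  using tlinear_fsc[of F 0 0] zero_T by simp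
lemma tlinear_sum: "tlinear F \<Longrightarrow> (\<And>i. i \<in> I \<Longrightarrow> g i \<in> T) \<Longrightarrow> F (\<Sum>i\<in>I. g i) = (\<Sum>i\<in>I. F (g i))"
proof (induction I rule: infinite_finite_induct)
  case (insert x F')
  have "F (\<Sum>i\<in>insert x F'. g i) = F (g x + (\<Sum>i\<in>F'. g i))"
    by (simp only: sum.insert[OF insert(1,2)])
  also have "\<dots> = F (g x) + F (\<Sum>i\<in>F'. g i)"
    by (rule tlinear_add[OF insert(4)]) (use insert in \<open>auto intro: sum_T\<close>)
  finally show ?case using insert(3,4,5) by (simp only: sum.insert[OF insert(1,2)]) simp
next
  case (infinite A) thus ?case using tlinear_zero by (metis sum.infinite)
qed (metis sum.empty tlinear_zero)
lemma tlinear_minus: "tlinear F \<Longrightarrow> s \<in> T \<Longrightarrow> F (- s) = - F s"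
proof -
  assume a: "tlinear F" "s \<in> T"
  have m: "fsc (-1) x = - x" for x :: "('k,'a) t2" unfolding fsc_def by (simp add: fun_eq_iff)
  show ?thesis using tlinear_fsc[OF a, of "-1"] by (simp add: m)
qed
lemma tlinear_diff: "tlinear F \<Longrightarrow> s \<in> T \<Longrightarrow> t \<in> T \<Longrightarrow> F (s - t) = F s - F t"
proof -
  assume a: "tlinear F" "s \<in> T" "t \<in> T"
  have "F (s + - t) = F s + F (- t)" using a by (intro tlinear_add minus_T)
  thus ?thesis using tlinear_minus[OF a(1,3)] by (simp only: diff_conv_add_uminus)
qed

lemma is_mlt_tlinear: assumes "is_mlt T fsc (mult2 sc) m" shows "tlinear (fst m)" "tlinear (snd m)"
  using assms unfolding is_mlt_def tlinear_def by auto

lemma tlinear_lift2: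
  assumes b: "balanced \<beta>" and inT: "\<And>x y. \<beta> x y \<in> T" and s: "\<And>c x y. \<beta> (sc c x) y = fsc c (\<beta> x y)"
  shows "tlinear (lift2 sc \<beta>)"
  unfolding tlinear_def
proof (intro conjI ballI allI)
  fix x assume "x \<in> T"
  then obtain n a b where x: "x = (\<Sum>i<(n::nat). tens2 sc (a i) (b i))" by (rule TT2E)
  show "lift2 sc \<beta> x \<in> T" unfolding x lift2_sum[OF b] by (rule sum_T) (rule inT)
  fix c
  have fx: "fsc c x = (\<Sum>i<n. tens2 sc (sc c (a i)) (b i))" unfolding x fsc_sum by (simp add: tens2_sc_l)
  show "lift2 sc \<beta> (fsc c x) = fsc c (lift2 sc \<beta> x)"
    unfolding fx lift2_sum[OF b] s unfolding x lift2_sum[OF b] fsc_sum ..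
next
  fix x y assume "x \<in> T" "y \<in> T" thus "lift2 sc \<beta> (x + y) = lift2 sc \<beta> x + lift2 sc \<beta> y"
    by (rule lift2_add[OF b])
qed

lemma balanced_tens_one_left: "balanced (\<lambda>x y. tens2 sc (a * x) y)"
  by (rule balancedI) (simp_all add: distrib_left tens2_add_l tens2_add_r sc_mult_r[symmetric] tens2_sc_l tens2_sc_r)
lemma balanced_tens_one_right: "balanced (\<lambda>x y. tens2 sc (x * a) y)"
  by (rule balancedI) (simp_all add: distrib_right tens2_add_l tens2_add_r sc_mult_l[symmetric] tens2_sc_l tens2_sc_r)
lemma balanced_one_tens_left: "balanced (\<lambda>x y. tens2 sc x (b * y))"
  by (rule balancedI) (simp_all add: distrib_left tens2_add_l tens2_add_r sc_mult_r[symmetric] tens2_sc_l tens2_sc_r)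
lemma balanced_one_tens_right: "balanced (\<lambda>x y. tens2 sc x (y * b))"
  by (rule balancedI) (simp_all add: distrib_right tens2_add_l tens2_add_r sc_mult_l[symmetric] tens2_sc_l tens2_sc_r)

lemma tlinear_tens_one: "tlinear (fst (tens_one sc a))" "tlinear (snd (tens_one sc a))"
  unfolding tens_one_def fst_conv snd_conv
  by (rule tlinear_lift2; simp add: balanced_tens_one_left balanced_tens_one_right tens2_T
      sc_mult_r[symmetric] sc_mult_l[symmetric] tens2_sc_l)+
lemma tlinear_one_tens: "tlinear (fst (one_tens sc a))" "tlinear (snd (one_tens sc a))"
  unfolding one_tens_def fst_conv snd_conv
  by (rule tlinear_lift2; simp add: balanced_one_tens_left balanced_one_tens_right tens2_T tens2_sc_l)+

lemma tens_one_sum: "fst (tens_one sc x) (\<Sum>i<(n::nat). tens2 sc (a i) (b i)) = (\<Sum>i<n. tens2 sc (x * a i) (b i))"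
  "snd (tens_one sc x) (\<Sum>i<(n::nat). tens2 sc (a i) (b i)) = (\<Sum>i<n. tens2 sc (a i * x) (b i))"
  unfolding tens_one_def fst_conv snd_conv by (simp_all add: lift2_sum balanced_tens_one_left balanced_tens_one_right)
lemma one_tens_sum: "fst (one_tens sc x) (\<Sum>i<(n::nat). tens2 sc (a i) (b i)) = (\<Sum>i<n. tens2 sc (a i) (x * b i))"
  "snd (one_tens sc x) (\<Sum>i<(n::nat). tens2 sc (a i) (b i)) = (\<Sum>i<n. tens2 sc (a i) (b i * x))"
  unfolding one_tens_def fst_conv snd_conv by (simp_all add: lift2_sum balanced_one_tens_left balanced_one_tens_right)
lemma tens_one_tens2: "fst (tens_one sc x) (tens2 sc a b) = tens2 sc (x * a) b"
  "snd (tens_one sc x) (tens2 sc a b) = tens2 sc (a * x) b"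
  unfolding tens_one_def fst_conv snd_conv by (simp_all add: lift2_tens2 balanced_tens_one_left balanced_tens_one_right)
lemma one_tens_tens2: "fst (one_tens sc x) (tens2 sc a b) = tens2 sc a (x * b)"
  "snd (one_tens sc x) (tens2 sc a b) = tens2 sc a (b * x)"
  unfolding one_tens_def fst_conv snd_conv by (simp_all add: lift2_tens2 balanced_one_tens_left balanced_one_tens_right)

lemma tens_one_add: assumes "s \<in> T"
  shows "fst (tens_one sc (x + y)) s = fst (tens_one sc x) s + fst (tens_one sc y) s"
  by (rule TT2E[OF assms]) (simp add: tens_one_sum distrib_left distrib_right tens2_add_l sum.distrib)
lemma tens_one_sc: assumes "s \<in> T"
  shows "fst (tens_one sc (sc c x)) s = fsc c (fst (tens_one sc x) s)"
  by (rule TT2E[OF assms]) (simp add: tens_one_sum sc_mult_l[symmetric] sc_mult_r[symmetric] tens2_sc_l fsc_sum)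
lemma one_tens_add: assumes "s \<in> T"
  shows "fst (one_tens sc (x + y)) s = fst (one_tens sc x) s + fst (one_tens sc y) s"
  by (rule TT2E[OF assms]) (simp add: one_tens_sum distrib_left distrib_right tens2_add_r sum.distrib)
lemma one_tens_sc: assumes "s \<in> T"
  shows "fst (one_tens sc (sc c x)) s = fsc c (fst (one_tens sc x) s)"
  by (rule TT2E[OF assms]) (simp add: one_tens_sum sc_mult_l[symmetric] sc_mult_r[symmetric] tens2_sc_r fsc_sum)

lemma tlinear_mult2_left: "w \<in> T \<Longrightarrow> tlinear (\<lambda>s. mult2 sc s w)"
proof -
  assume "w \<in> T"
  then obtain m c d where w: "w = (\<Sum>j<(m::nat). tens2 sc (c j) (d j))" by (rule TT2E)
  have b: "balanced (\<lambda>x y. \<Sum>j<m. tens2 sc (x * c j) (y * d j))"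
    by (rule balancedI) (simp_all add: distrib_right tens2_add_l tens2_add_r sum.distrib
        sc_mult_l[symmetric] tens2_sc_l tens2_sc_r)
  have e: "(\<lambda>s. mult2 sc s w) = lift2 sc (\<lambda>x y. \<Sum>j<m. tens2 sc (x * c j) (y * d j))"
  proof
    fix s
    show "mult2 sc s w = lift2 sc (\<lambda>x y. \<Sum>j<m. tens2 sc (x * c j) (y * d j)) s"
      unfolding mult2_def w by (simp add: lift2_sum[OF balanced_tens2_mult])
  qed
  show ?thesis unfolding e
    by (rule tlinear_lift2[OF b]) (simp_all add: sum_T tens2_T fsc_sum sc_mult_l[symmetric] tens2_sc_l)
qed

lemma balanced_rtens: "balanced (\<lambda>x y. tens3 sc x y z)"
  by (rule balancedI) (simp_all add: tens3_add_1 tens3_add_2 tens3_sc_1 tens3_sc_2)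
lemma balanced_ltens: "balanced (\<lambda>y z. tens3 sc x y z)"
  by (rule balancedI) (simp_all add: tens3_add_2 tens3_add_3 tens3_sc_2 tens3_sc_3)

lemma rtens_sum: "rtens sc (\<Sum>i<(n::nat). tens2 sc (a i) (b i)) z = (\<Sum>i<n. tens3 sc (a i) (b i) z)"
  unfolding rtens_def by (simp add: lift2_sum balanced_rtens)
lemma ltens_sum: "ltens sc x (\<Sum>i<(n::nat). tens2 sc (a i) (b i)) = (\<Sum>i<n. tens3 sc x (a i) (b i))"
  unfolding ltens_def by (simp add: lift2_sum balanced_ltens)

lemma rtens_T3: "s \<in> T \<Longrightarrow> rtens sc s z \<in> T3"
  by (erule TT2E) (simp add: rtens_sum sum_T3 tens3_T)
lemma ltens_T3: "s \<in> T \<Longrightarrow> ltens sc x s \<in> T3"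
  by (erule TT2E) (simp add: ltens_sum sum_T3 tens3_T)
lemma rtens_add_l: "s \<in> T \<Longrightarrow> t \<in> T \<Longrightarrow> rtens sc (s + t) z = rtens sc s z + rtens sc t z"
  unfolding rtens_def by (rule lift2_add[OF balanced_rtens])
lemma ltens_add_r: "s \<in> T \<Longrightarrow> t \<in> T \<Longrightarrow> ltens sc x (s + t) = ltens sc x s + ltens sc x t"
  unfolding ltens_def by (rule lift2_add[OF balanced_ltens])
lemma rtens_add_r: "s \<in> T \<Longrightarrow> rtens sc s (z + z') = rtens sc s z + rtens sc s z'"
  by (erule TT2E) (simp add: rtens_sum tens3_add_3 sum.distrib)
lemma ltens_add_l: "s \<in> T \<Longrightarrow> ltens sc (x + x') s = ltens sc x s + ltens sc x' s"
  by (erule TT2E) (simp add: ltens_sum tens3_add_1 sum.distrib)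
lemma rtens_fsc: "s \<in> T \<Longrightarrow> rtens sc (fsc c s) z = rtens sc s (sc c z)"
  by (erule TT2E) (simp add: rtens_sum fsc_sum tens2_sc_l[symmetric] tens3_sc_1 tens3_sc_3)
lemma ltens_fsc: "s \<in> T \<Longrightarrow> ltens sc x (fsc c s) = ltens sc (sc c x) s"
  by (erule TT2E) (simp add: ltens_sum fsc_sum tens2_sc_l[symmetric] tens3_sc_1 tens3_sc_2)

lemma balanced3_rtens_image: assumes F: "tlinear F" shows "balanced3 (\<lambda>x y z. rtens sc (F (tens2 sc x y)) z)"
proof (rule balanced3I)
  fix a a' b d show "rtens sc (F (tens2 sc (a + a') b)) d = rtens sc (F (tens2 sc a b)) d + rtens sc (F (tens2 sc a' b)) d"
    by (simp add: tens2_add_l tlinear_add[OF F] tens2_T rtens_add_l tlinear_T[OF F])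
next
  fix a b b' d show "rtens sc (F (tens2 sc a (b + b'))) d = rtens sc (F (tens2 sc a b)) d + rtens sc (F (tens2 sc a b')) d"
    by (simp add: tens2_add_r tlinear_add[OF F] tens2_T rtens_add_l tlinear_T[OF F])
next
  fix a b d d' show "rtens sc (F (tens2 sc a b)) (d + d') = rtens sc (F (tens2 sc a b)) d + rtens sc (F (tens2 sc a b)) d'"
    by (simp add: rtens_add_r tlinear_T[OF F] tens2_T)
next
  fix c a b d show "rtens sc (F (tens2 sc (sc c a) b)) d = rtens sc (F (tens2 sc a (sc c b))) d"
    by (simp add: tens2_sc_l tens2_sc_r)
next
  fix c a b d show "rtens sc (F (tens2 sc a (sc c b))) d = rtens sc (F (tens2 sc a b)) (sc c d)"
    by (simp add: tens2_sc_r tlinear_fsc[OF F] tens2_T rtens_fsc tlinear_T[OF F])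
qed

lemma balanced3_ltens_image: assumes F: "tlinear F" shows "balanced3 (\<lambda>x y z. ltens sc x (F (tens2 sc y z)))"
proof (rule balanced3I)
  fix a a' b d show "ltens sc (a + a') (F (tens2 sc b d)) = ltens sc a (F (tens2 sc b d)) + ltens sc a' (F (tens2 sc b d))"
    by (simp add: ltens_add_l tlinear_T[OF F] tens2_T)
next
  fix a b b' d show "ltens sc a (F (tens2 sc (b + b') d)) = ltens sc a (F (tens2 sc b d)) + ltens sc a (F (tens2 sc b' d))"
    by (simp add: tens2_add_l tlinear_add[OF F] tens2_T ltens_add_r tlinear_T[OF F])
next
  fix a b d d' show "ltens sc a (F (tens2 sc b (d + d'))) = ltens sc a (F (tens2 sc b d)) + ltens sc a (F (tens2 sc b d'))"
    by (simp add: tens2_add_r tlinear_add[OF F] tens2_T ltens_add_r tlinear_T[OF F])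
next
  fix c a b d show "ltens sc (sc c a) (F (tens2 sc b d)) = ltens sc a (F (tens2 sc (sc c b) d))"
    by (simp add: tens2_sc_l tlinear_fsc[OF F] tens2_T ltens_fsc tlinear_T[OF F])
next
  fix c a b d show "ltens sc a (F (tens2 sc (sc c b) d)) = ltens sc a (F (tens2 sc b (sc c d)))"
    by (simp add: tens2_sc_l tens2_sc_r)
qed

lemma E_tens_one_sum: assumes "tlinear (fst E)"
  shows "fst (E_tens_one sc E) (\<Sum>i<(n::nat). tens3 sc (u i) (v i) (r i)) = (\<Sum>i<n. rtens sc (fst E (tens2 sc (u i) (v i))) (r i))"
  unfolding E_tens_one_def fst_conv by (rule lift3_sum[OF balanced3_rtens_image[OF assms]])
lemma one_tens_E_sum: assumes "tlinear (fst E)"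
  shows "fst (one_tens_E sc E) (\<Sum>i<(n::nat). tens3 sc (u i) (v i) (r i)) = (\<Sum>i<n. ltens sc (u i) (fst E (tens2 sc (v i) (r i))))"
  unfolding one_tens_E_def fst_conv by (rule lift3_sum[OF balanced3_ltens_image[OF assms]])

lemma mu_tens2: "mu sc (tens2 sc a b) = a * b"
  unfolding mu_def by (simp add: lift2_tens2 balanced_mult)

definition id_eps_id :: "('a \<Rightarrow> 'k) \<Rightarrow> ('k,'a) t3 \<Rightarrow> ('k,'a) t2" where
  "id_eps_id \<epsilon> = lift3 sc (\<lambda>p q r. tens2 sc (sc (\<epsilon> q) p) r)"

context fixes \<epsilon> :: "'a \<Rightarrow> 'k" assumes lin_eps: "lin_fun sc \<epsilon>"
begin

lemma eps_id_sum: "eps_id sc \<epsilon> (\<Sum>i<(n::nat). tens2 sc (a i) (b i)) = (\<Sum>i<n. sc (\<epsilon> (a i)) (b i))"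
  unfolding eps_id_def by (simp add: lift2_sum balanced_scale_left[OF lin_eps])
lemma id_eps_sum: "id_eps sc \<epsilon> (\<Sum>i<(n::nat). tens2 sc (a i) (b i)) = (\<Sum>i<n. sc (\<epsilon> (b i)) (a i))"
  unfolding id_eps_def by (simp add: lift2_sum balanced_scale_right[OF lin_eps])
lemma eps_id_tens2: "eps_id sc \<epsilon> (tens2 sc a b) = sc (\<epsilon> a) b"
  unfolding eps_id_def by (simp add: lift2_tens2 balanced_scale_left[OF lin_eps])
lemma id_eps_tens2: "id_eps sc \<epsilon> (tens2 sc a b) = sc (\<epsilon> b) a"
  unfolding id_eps_def by (simp add: lift2_tens2 balanced_scale_right[OF lin_eps])
lemma eps_id_sumT: "(\<And>i. i \<in> I \<Longrightarrow> g i \<in> T) \<Longrightarrow> eps_id sc \<epsilon> (\<Sum>i\<in>I. g i) = (\<Sum>i\<in>I. eps_id sc \<epsilon> (g i))"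
  unfolding eps_id_def by (rule lift2_sumT[OF balanced_scale_left[OF lin_eps]])
lemma id_eps_sumT: "(\<And>i. i \<in> I \<Longrightarrow> g i \<in> T) \<Longrightarrow> id_eps sc \<epsilon> (\<Sum>i\<in>I. g i) = (\<Sum>i\<in>I. id_eps sc \<epsilon> (g i))"
  unfolding id_eps_def by (rule lift2_sumT[OF balanced_scale_right[OF lin_eps]])

lemma balanced3_id_eps_id: "balanced3 (\<lambda>p q r. tens2 sc (sc (\<epsilon> q) p) r)"
  by (rule balanced3I) (simp_all add: tens2_add_l tens2_add_r lin_add[OF lin_eps] lin_sc[OF lin_eps] sc_add_l sc_add_r
      sc_sc tens2_sc_l tens2_sc_r mult.commute fsc_fsc)

lemma id_eps_id_sum: "id_eps_id \<epsilon> (\<Sum>i<(n::nat). tens3 sc (a i) (b i) (c i)) = (\<Sum>i<n. tens2 sc (sc (\<epsilon> (b i)) (a i)) (c i))"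
  unfolding id_eps_id_def by (rule lift3_sum[OF balanced3_id_eps_id])
lemma id_eps_id_sumT: "(\<And>i. i \<in> I \<Longrightarrow> g i \<in> T3) \<Longrightarrow> id_eps_id \<epsilon> (\<Sum>i\<in>I. g i) = (\<Sum>i\<in>I. id_eps_id \<epsilon> (g i))"
  unfolding id_eps_id_def by (rule lift3_sumT[OF balanced3_id_eps_id])

lemma id_eps_id_rtens: "s \<in> T \<Longrightarrow> id_eps_id \<epsilon> (rtens sc s z) = tens2 sc (id_eps sc \<epsilon> s) z"
  by (erule TT2E) (simp add: rtens_sum id_eps_id_sum id_eps_sum balanced_sum_left[OF balanced_rtens] tens2_add_l
      balanced_sum_left[OF balanced_tens2] tens2_sc_l tens2_sc_r)
lemma id_eps_id_ltens: "s \<in> T \<Longrightarrow> id_eps_id \<epsilon> (ltens sc a s) = tens2 sc a (eps_id sc \<epsilon> s)"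
  by (erule TT2E) (simp add: ltens_sum id_eps_id_sum eps_id_sum
      balanced_sum_right[OF balanced_tens2] tens2_sc_l tens2_sc_r)

lemma id_eps_tens_one: "t \<in> T \<Longrightarrow> id_eps sc \<epsilon> (fst (tens_one sc p) t) = p * id_eps sc \<epsilon> t"
  by (erule TT2E) (simp add: tens_one_sum id_eps_sum sum_distrib_left sc_mult_r)
lemma eps_id_one_tens: "t \<in> T \<Longrightarrow> eps_id sc \<epsilon> (fst (one_tens sc a) t) = a * eps_id sc \<epsilon> t"
  by (erule TT2E) (simp add: one_tens_sum eps_id_sum sum_distrib_left sc_mult_r)

context
  assumes M: "\<And>a b. \<epsilon> (a * b) = \<epsilon> a * \<epsilon> b"
begin

lemma eps_id_mult2_tens2: "t \<in> T \<Longrightarrow> eps_id sc \<epsilon> (mult2 sc t (tens2 sc b c)) = sc (\<epsilon> b) (eps_id sc \<epsilon> t * c)"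
  by (erule TT2E) (simp add: mult2_sum_r eps_id_sum M sum_scale_mult_right sc_sum_r sc_sc mult.commute)
lemma id_eps_mult2_tens2: "t \<in> T \<Longrightarrow> id_eps sc \<epsilon> (mult2 sc t (tens2 sc b c)) = sc (\<epsilon> c) (id_eps sc \<epsilon> t * b)"
  by (erule TT2E) (simp add: mult2_sum_r id_eps_sum M sum_scale_mult_right sc_sum_r sc_sc mult.commute)
lemma id_eps_tens2_mult2: "t \<in> T \<Longrightarrow> id_eps sc \<epsilon> (mult2 sc (tens2 sc b c) t) = sc (\<epsilon> c) (b * id_eps sc \<epsilon> t)"
  by (erule TT2E) (simp add: mult2_sum_l id_eps_sum M sum_distrib_left sc_mult_r sc_sum_r sc_sc mult.commute)
lemma eps_id_tens_one: "t \<in> T \<Longrightarrow> eps_id sc \<epsilon> (fst (tens_one sc a) t) = sc (\<epsilon> a) (eps_id sc \<epsilon> t)"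
  by (erule TT2E) (simp add: tens_one_sum eps_id_sum M sc_sum_r sc_sc)
lemma id_eps_one_tens: "t \<in> T \<Longrightarrow> id_eps sc \<epsilon> (snd (one_tens sc a) t) = sc (\<epsilon> a) (id_eps sc \<epsilon> t)"
  by (erule TT2E) (simp add: one_tens_sum id_eps_sum M sc_sum_r sc_sc mult.commute)

end

end

end

section \<open>Non-degeneracy of A \<otimes> A\<close>

locale nondegenerate_k_alg = k_alg sc for sc :: "'k::field \<Rightarrow> 'a::ring \<Rightarrow> 'a" +
  assumes zero_if_left_annihilated: "\<And>b::'a. (\<forall>a. a * b = 0) \<Longrightarrow> b = 0"
      and zero_if_right_annihilated: "\<And>b::'a. (\<forall>a. b * a = 0) \<Longrightarrow> b = 0"
begin

lemma slice_zero_if_mult2_tens2_zero: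
  assumes z: "\<And>u r. mult2 sc (\<Sum>i<(n::nat). tens2 sc (d i) (d' i)) (tens2 sc u r) = 0"
    and g: "lin_fun sc g"
  shows "(\<Sum>i<n. sc (g (d' i)) (d i)) = 0"
proof (rule zero_if_right_annihilated, intro allI)
  fix u
  show "(\<Sum>i<n. sc (g (d' i)) (d i)) * u = 0"
  proof (rule eq_0_if_functionals_vanish)
    fix h assume h: "lin_fun sc h"
    have h_slice: "(\<Sum>i<n. sc (h (d i * u)) (d' i)) = 0"
    proof (rule zero_if_right_annihilated, intro allI)
      fix r
      have "0 = lift2 sc (\<lambda>p q. sc (h p) q) (mult2 sc (\<Sum>i<n. tens2 sc (d i) (d' i)) (tens2 sc u r))"
        using z lift2_zero[OF balanced_scale_left[OF h]] by simp
      also have "\<dots> = (\<Sum>i<n. sc (h (d i * u)) (d' i * r))"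
        unfolding mult2_sum_r lift2_sum[OF balanced_scale_left[OF h]] ..
      finally show "(\<Sum>i<n. sc (h (d i * u)) (d' i)) * r = 0"
        by (simp add: sum_scale_mult_right)
    qed
    have "h ((\<Sum>i<n. sc (g (d' i)) (d i)) * u) = (\<Sum>i<n. h (d i * u) * g (d' i))"
      by (simp add: sum_scale_mult_right lin_sum[OF h] lin_sc[OF h] sc_mult_l[symmetric] mult.commute)
    also have "\<dots> = g (\<Sum>i<n. sc (h (d i * u)) (d' i))"
      by (simp add: lin_sum[OF g] lin_sc[OF g])
    also have "\<dots> = 0" using h_slice lin_zero[OF g] by simp
    finally show "h ((\<Sum>i<n. sc (g (d' i)) (d i)) * u) = 0" .
  qed
qed

lemma mult2_nondegenerate:
  assumes sT: "s \<in> T" and z: "\<And>u r. mult2 sc s (tens2 sc u r) = 0"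
  shows "s = 0"
proof
  obtain n d d' where s: "s = (\<Sum>i<(n::nat). tens2 sc (d i) (d' i))" using sT by (rule TT2E)
  fix p :: "('a \<Rightarrow> 'k) \<times> ('a \<Rightarrow> 'k)"
  obtain f g where p: "p = (f, g)" by (cases p)
  show "s p = 0 p"
  proof (cases "lin_fun sc f \<and> lin_fun sc g")
    case True
    then have f: "lin_fun sc f" and g: "lin_fun sc g" by auto
    have "s p = (\<Sum>i<n. f (d i) * g (d' i))" by (simp add: p s sum_fun_apply tens2_app f g)
    also have "\<dots> = f (\<Sum>i<n. sc (g (d' i)) (d i))"
      by (simp add: lin_sum[OF f] lin_sc[OF f] mult.commute)
    also have "\<dots> = 0"
      using slice_zero_if_mult2_tens2_zero[OF z[unfolded s] g] lin_zero[OF f] by simp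
    finally show ?thesis by simp
  qed (auto simp: p s sum_fun_apply tens2_def)
qed

lemma eq_if_mult2_tens2_eq:
  assumes "s \<in> T" "s' \<in> T" "\<And>u r. mult2 sc s (tens2 sc u r) = mult2 sc s' (tens2 sc u r)"
  shows "s = s'"
proof -
  have "s - s' = 0"
  proof (rule mult2_nondegenerate)
    show "s - s' \<in> T" using assms(1,2) by (rule diff_T)
    fix u r
    show "mult2 sc (s - s') (tens2 sc u r) = 0"
      using tlinear_diff[OF tlinear_mult2_left[OF tens2_T] assms(1,2)] assms(3) by simp
  qed
  thus ?thesis by simp
qed

end

locale weak_mult_bialg =
  fixes sc :: "'k::field \<Rightarrow> 'a::ring \<Rightarrow> 'a"
    and E :: "('k,'a) t2 mlt"
    and \<Delta> :: "'a \<Rightarrow> ('k,'a) t2 mlt"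
    and \<epsilon> :: "'a \<Rightarrow> 'k"
  assumes W: "weak_multiplier_bialgebra sc E \<Delta> \<epsilon>"

sublocale weak_mult_bialg \<subseteq> nondegenerate_k_alg sc
proof
  show "k_algebra sc" using W unfolding weak_multiplier_bialgebra_def by (elim conjE) blast
  show "(\<forall>a. a * b = 0) \<Longrightarrow> b = 0" for b :: 'a
    using W unfolding weak_multiplier_bialgebra_def by (elim conjE) blast
  show "(\<forall>a. b * a = 0) \<Longrightarrow> b = 0" for b :: 'a
    using W unfolding weak_multiplier_bialgebra_def by (elim conjE) blast
qed

context weak_mult_bialg
begin

lemma mult_surj: "\<exists>(n::nat) a b. (c::'a) = (\<Sum>i<n. a i * b i)"
  using W unfolding weak_multiplier_bialgebra_def by (elim conjE) blast
lemma E_is_mlt: "is_mlt T fsc (mult2 sc) E"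
  using W unfolding weak_multiplier_bialgebra_def by (elim conjE) blast
lemma E_idem: "meq T (mprod E E) E"
  using W unfolding weak_multiplier_bialgebra_def by (elim conjE) blast
lemma Delta_is_mlt: "is_mlt T fsc (mult2 sc) (\<Delta> a)"
  using W unfolding weak_multiplier_bialgebra_def by (elim conjE) blast
lemma Delta_add: "meq T (\<Delta> (a + b)) (madd (\<Delta> a) (\<Delta> b))"
  using W unfolding weak_multiplier_bialgebra_def by (elim conjE) blast
lemma Delta_scale: "meq T (\<Delta> (sc c a)) (msc fsc c (\<Delta> a))"
  using W unfolding weak_multiplier_bialgebra_def by (elim conjE) blast
lemma lin_eps: "lin_fun sc \<epsilon>"
  using W unfolding weak_multiplier_bialgebra_def by (elim conjE) blast
lemma T1_exists: "\<exists>s\<in>T. meq T (mprod (\<Delta> a) (one_tens sc b)) (membed (mult2 sc) s)"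
  using W unfolding weak_multiplier_bialgebra_def by (elim conjE) blast
lemma T2_exists: "\<exists>s\<in>T. meq T (mprod (tens_one sc a) (\<Delta> b)) (membed (mult2 sc) s)"
  using W unfolding weak_multiplier_bialgebra_def by (elim conjE) blast
lemma counit_T1_T2: "t \<in> T \<Longrightarrow> eps_id sc \<epsilon> (T1 sc \<Delta> t) = mu sc t \<and> id_eps sc \<epsilon> (T2 sc \<Delta> t) = mu sc t"
  using W unfolding weak_multiplier_bialgebra_def by (elim conjE) blast
lemma Delta_E_range_span: "fspan {fst (\<Delta> a) (tens2 sc b b') | a b b'. True} = fspan {fst E (tens2 sc b b') | b b'. True}"
  using W unfolding weak_multiplier_bialgebra_def by (elim conjE) blast
lemma E3_exists: "\<exists>X. ext_value sc (id_tens_Delta sc \<Delta>) (one_tens_E sc E) E X \<and>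
          ext_value sc (Delta_tens_id sc \<Delta>) (E_tens_one sc E) E X \<and>
          meq (TT3 sc) (mprod (E_tens_one sc E) (one_tens_E sc E)) X \<and>
          meq (TT3 sc) (mprod (one_tens_E sc E) (E_tens_one sc E)) X"
  using W unfolding weak_multiplier_bialgebra_def by (elim conjE) blast
lemma counit_E_left: "eps_id sc \<epsilon> (fst (one_tens sc a) (fst E (tens2 sc b c)))
              = eps_id sc \<epsilon> (fst (\<Delta> a) (tens2 sc b c))"
  using W unfolding weak_multiplier_bialgebra_def by (elim conjE) meson
lemma counit_E_right: "eps_id sc \<epsilon> (snd (one_tens sc c) (snd E (tens2 sc a b)))
              = eps_id sc \<epsilon> (snd (\<Delta> c) (tens2 sc a b))"
  using W unfolding weak_multiplier_bialgebra_def by (elim conjE) meson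

lemma tlinear_E_left: "tlinear (fst E)" and tlinear_E_right: "tlinear (snd E)"
  using is_mlt_tlinear[OF E_is_mlt] by auto
lemma tlinear_Delta_left: "tlinear (fst (\<Delta> a))" and tlinear_Delta_right: "tlinear (snd (\<Delta> a))"
  using is_mlt_tlinear[OF Delta_is_mlt] by auto

lemma Delta_add_left: "s \<in> T \<Longrightarrow> fst (\<Delta> (a + b)) s = fst (\<Delta> a) s + fst (\<Delta> b) s"
  using Delta_add unfolding meq_def madd_def by auto
lemma Delta_scale_left: "s \<in> T \<Longrightarrow> fst (\<Delta> (sc c a)) s = fsc c (fst (\<Delta> a) s)"
  using Delta_scale unfolding meq_def msc_def by auto

lemma T1el_spec: "T1el sc \<Delta> a b \<in> T \<and> meq T (mprod (\<Delta> a) (one_tens sc b)) (membed (mult2 sc) (T1el sc \<Delta> a b))"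
proof -
  have "\<exists>!s. s \<in> T \<and> meq T (mprod (\<Delta> a) (one_tens sc b)) (membed (mult2 sc) s)"
  proof (rule ex_ex1I)
    show "\<exists>s. s \<in> T \<and> meq T (mprod (\<Delta> a) (one_tens sc b)) (membed (mult2 sc) s)" using T1_exists by blast
  next
    fix s s' assume a: "s \<in> T \<and> meq T (mprod (\<Delta> a) (one_tens sc b)) (membed (mult2 sc) s)"
      "s' \<in> T \<and> meq T (mprod (\<Delta> a) (one_tens sc b)) (membed (mult2 sc) s')"
    show "s = s'"
      by (rule eq_if_mult2_tens2_eq) (use a tens2_T in \<open>auto simp: meq_def membed_def mprod_def\<close>)
  qed
  from theI'[OF this] show ?thesis unfolding T1el_def .
qed

lemma T2el_spec: "T2el sc \<Delta> a b \<in> T \<and> meq T (mprod (tens_one sc a) (\<Delta> b)) (membed (mult2 sc) (T2el sc \<Delta> a b))"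
proof -
  have "\<exists>!s. s \<in> T \<and> meq T (mprod (tens_one sc a) (\<Delta> b)) (membed (mult2 sc) s)"
  proof (rule ex_ex1I)
    show "\<exists>s. s \<in> T \<and> meq T (mprod (tens_one sc a) (\<Delta> b)) (membed (mult2 sc) s)" using T2_exists by blast
  next
    fix s s' assume a: "s \<in> T \<and> meq T (mprod (tens_one sc a) (\<Delta> b)) (membed (mult2 sc) s)"
      "s' \<in> T \<and> meq T (mprod (tens_one sc a) (\<Delta> b)) (membed (mult2 sc) s')"
    show "s = s'"
      by (rule eq_if_mult2_tens2_eq) (use a tens2_T in \<open>auto simp: meq_def membed_def mprod_def\<close>)
  qed
  from theI'[OF this] show ?thesis unfolding T2el_def .
qed

lemma T1el_T: "T1el sc \<Delta> a b \<in> T" using T1el_spec by blast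
lemma T2el_T: "T2el sc \<Delta> a b \<in> T" using T2el_spec by blast
lemma T1el_mult2_left: "w \<in> T \<Longrightarrow> mult2 sc (T1el sc \<Delta> a b) w = fst (\<Delta> a) (fst (one_tens sc b) w)"
  using T1el_spec unfolding meq_def membed_def mprod_def by auto
lemma T1el_mult2_right: "w \<in> T \<Longrightarrow> mult2 sc w (T1el sc \<Delta> a b) = snd (one_tens sc b) (snd (\<Delta> a) w)"
  using T1el_spec unfolding meq_def membed_def mprod_def by auto
lemma T2el_mult2_left: "w \<in> T \<Longrightarrow> mult2 sc (T2el sc \<Delta> a b) w = fst (tens_one sc a) (fst (\<Delta> b) w)"
  using T2el_spec unfolding meq_def membed_def mprod_def by auto
lemma T2el_mult2_right: "w \<in> T \<Longrightarrow> mult2 sc w (T2el sc \<Delta> a b) = snd (\<Delta> b) (snd (tens_one sc a) w)"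
  using T2el_spec unfolding meq_def membed_def mprod_def by auto

lemma T1el_char: "s \<in> T \<Longrightarrow> (\<And>w. w \<in> T \<Longrightarrow> mult2 sc s w = fst (\<Delta> a) (fst (one_tens sc b) w)) \<Longrightarrow> T1el sc \<Delta> a b = s"
  by (rule eq_if_mult2_tens2_eq) (simp_all add: T1el_T T1el_mult2_left tens2_T)
lemma T2el_char: "s \<in> T \<Longrightarrow> (\<And>w. w \<in> T \<Longrightarrow> mult2 sc s w = fst (tens_one sc a) (fst (\<Delta> b) w)) \<Longrightarrow> T2el sc \<Delta> a b = s"
  by (rule eq_if_mult2_tens2_eq) (simp_all add: T2el_T T2el_mult2_left tens2_T)

lemma mult2_add_l: "s \<in> T \<Longrightarrow> t \<in> T \<Longrightarrow> w \<in> T \<Longrightarrow> mult2 sc (s + t) w = mult2 sc s w + mult2 sc t w"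
  using tlinear_add[OF tlinear_mult2_left] by blast
lemma mult2_fsc_l: "s \<in> T \<Longrightarrow> w \<in> T \<Longrightarrow> mult2 sc (fsc c s) w = fsc c (mult2 sc s w)"
  using tlinear_fsc[OF tlinear_mult2_left] by blast

lemma balanced_T2el: "balanced (T2el sc \<Delta>)"
proof (rule balancedI)
  fix a a' b
  show "T2el sc \<Delta> (a + a') b = T2el sc \<Delta> a b + T2el sc \<Delta> a' b"
  proof (rule T2el_char)
    show "T2el sc \<Delta> a b + T2el sc \<Delta> a' b \<in> T" by (simp add: add_T T2el_T)
    fix w assume w: "w \<in> T"
    show "mult2 sc (T2el sc \<Delta> a b + T2el sc \<Delta> a' b) w = fst (tens_one sc (a + a')) (fst (\<Delta> b) w)"
      by (simp add: mult2_add_l T2el_T w T2el_mult2_left tens_one_add tlinear_T[OF tlinear_Delta_left])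
  qed
next
  fix a b b'
  show "T2el sc \<Delta> a (b + b') = T2el sc \<Delta> a b + T2el sc \<Delta> a b'"
  proof (rule T2el_char)
    show "T2el sc \<Delta> a b + T2el sc \<Delta> a b' \<in> T" by (simp add: add_T T2el_T)
    fix w assume w: "w \<in> T"
    show "mult2 sc (T2el sc \<Delta> a b + T2el sc \<Delta> a b') w = fst (tens_one sc a) (fst (\<Delta> (b + b')) w)"
      by (simp add: mult2_add_l T2el_T w T2el_mult2_left Delta_add_left tlinear_add[OF
          tlinear_tens_one(1)] tlinear_T[OF tlinear_Delta_left])
  qed
next
  fix c a b
  have "T2el sc \<Delta> (sc c a) b = fsc c (T2el sc \<Delta> a b)"
  proof (rule T2el_char)
    show "fsc c (T2el sc \<Delta> a b) \<in> T" by (simp add: fsc_T T2el_T)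
    fix w assume w: "w \<in> T"
    show "mult2 sc (fsc c (T2el sc \<Delta> a b)) w = fst (tens_one sc (sc c a)) (fst (\<Delta> b) w)"
      by (simp add: mult2_fsc_l T2el_T w T2el_mult2_left tens_one_sc tlinear_T[OF tlinear_Delta_left])
  qed
  moreover have "T2el sc \<Delta> a (sc c b) = fsc c (T2el sc \<Delta> a b)"
  proof (rule T2el_char)
    show "fsc c (T2el sc \<Delta> a b) \<in> T" by (simp add: fsc_T T2el_T)
    fix w assume w: "w \<in> T"
    show "mult2 sc (fsc c (T2el sc \<Delta> a b)) w = fst (tens_one sc a) (fst (\<Delta> (sc c b)) w)"
      by (simp add: mult2_fsc_l T2el_T w T2el_mult2_left Delta_scale_left tlinear_fsc[OF
          tlinear_tens_one(1)] tlinear_T[OF tlinear_Delta_left])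
  qed
  ultimately show "T2el sc \<Delta> (sc c a) b = T2el sc \<Delta> a (sc c b)" by simp
qed

lemma balanced_T1el: "balanced (T1el sc \<Delta>)"
proof (rule balancedI)
  fix a a' b
  show "T1el sc \<Delta> (a + a') b = T1el sc \<Delta> a b + T1el sc \<Delta> a' b"
  proof (rule T1el_char)
    show "T1el sc \<Delta> a b + T1el sc \<Delta> a' b \<in> T" by (simp add: add_T T1el_T)
    fix w assume w: "w \<in> T"
    show "mult2 sc (T1el sc \<Delta> a b + T1el sc \<Delta> a' b) w = fst (\<Delta> (a + a')) (fst (one_tens sc b) w)"
      by (simp add: mult2_add_l T1el_T w T1el_mult2_left Delta_add_left tlinear_T[OF tlinear_one_tens(1)])
  qed
next
  fix a b b'
  show "T1el sc \<Delta> a (b + b') = T1el sc \<Delta> a b + T1el sc \<Delta> a b'"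
  proof (rule T1el_char)
    show "T1el sc \<Delta> a b + T1el sc \<Delta> a b' \<in> T" by (simp add: add_T T1el_T)
    fix w assume w: "w \<in> T"
    show "mult2 sc (T1el sc \<Delta> a b + T1el sc \<Delta> a b') w = fst (\<Delta> a) (fst (one_tens sc (b + b')) w)"
      by (simp add: mult2_add_l T1el_T w T1el_mult2_left one_tens_add tlinear_add[OF tlinear_Delta_left] tlinear_T[OF tlinear_one_tens(1)])
  qed
next
  fix c a b
  have "T1el sc \<Delta> (sc c a) b = fsc c (T1el sc \<Delta> a b)"
  proof (rule T1el_char)
    show "fsc c (T1el sc \<Delta> a b) \<in> T" by (simp add: fsc_T T1el_T)
    fix w assume w: "w \<in> T"
    show "mult2 sc (fsc c (T1el sc \<Delta> a b)) w = fst (\<Delta> (sc c a)) (fst (one_tens sc b) w)"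
      by (simp add: mult2_fsc_l T1el_T w T1el_mult2_left Delta_scale_left tlinear_T[OF tlinear_one_tens(1)])
  qed
  moreover have "T1el sc \<Delta> a (sc c b) = fsc c (T1el sc \<Delta> a b)"
  proof (rule T1el_char)
    show "fsc c (T1el sc \<Delta> a b) \<in> T" by (simp add: fsc_T T1el_T)
    fix w assume w: "w \<in> T"
    show "mult2 sc (fsc c (T1el sc \<Delta> a b)) w = fst (\<Delta> a) (fst (one_tens sc (sc c b)) w)"
      by (simp add: mult2_fsc_l T1el_T w T1el_mult2_left one_tens_sc tlinear_fsc[OF tlinear_Delta_left] tlinear_T[OF tlinear_one_tens(1)])
  qed
  ultimately show "T1el sc \<Delta> (sc c a) b = T1el sc \<Delta> a (sc c b)" by simp
qed

lemma T1_tens2: "T1 sc \<Delta> (tens2 sc a b) = T1el sc \<Delta> a b"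
  unfolding T1_def by (rule lift2_tens2[OF balanced_T1el])
lemma T2_tens2: "T2 sc \<Delta> (tens2 sc a b) = T2el sc \<Delta> a b"
  unfolding T2_def by (rule lift2_tens2[OF balanced_T2el])

lemma eps_id_T1el: "eps_id sc \<epsilon> (T1el sc \<Delta> a b) = a * b"
  using counit_T1_T2[OF tens2_T, of a b] by (simp add: T1_tens2 mu_tens2)
lemma id_eps_T2el: "id_eps sc \<epsilon> (T2el sc \<Delta> a b) = a * b"
  using counit_T1_T2[OF tens2_T, of a b] by (simp add: T2_tens2 mu_tens2)

section \<open>E = 1 makes the counit multiplicative\<close>

abbreviation "eI \<equiv> eps_id sc \<epsilon>"
abbreviation "Ie \<equiv> id_eps sc \<epsilon>"

lemmas eI_sum = eps_id_sum[OF lin_eps] and Ie_sum = id_eps_sum[OF lin_eps]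
   and eI_tens2 = eps_id_tens2[OF lin_eps] and Ie_tens2 = id_eps_tens2[OF lin_eps]

lemma eps_sum: "\<epsilon> (\<Sum>i\<in>I. g i) = (\<Sum>i\<in>I. \<epsilon> (g i))" by (rule lin_sum[OF lin_eps])
lemma eps_sc: "\<epsilon> (sc c x) = c * \<epsilon> x" by (rule lin_sc[OF lin_eps])

lemma counit_mult_assoc_if_E_one:
  assumes E1: "meq T E mone"
  shows "\<epsilon> (x * (a * c)) = \<epsilon> (x * a) * \<epsilon> c"
proof -
  obtain n u u' where u: "T2el sc \<Delta> a c = (\<Sum>i<(n::nat). tens2 sc (u i) (u' i))"
    using T2el_T by (rule TT2E)
  have slice: "(\<Sum>i<n. sc (\<epsilon> (x * u i)) (u' i)) = sc (\<epsilon> (x * a)) c"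
  proof -
    have "y * (\<Sum>i<n. sc (\<epsilon> (x * u i)) (u' i)) = eI (mult2 sc (tens2 sc x y) (T2el sc \<Delta> a c))" for y
      unfolding u mult2_sum_l eI_sum by (simp add: sum_distrib_left sc_mult_r)
    also have "eI (mult2 sc (tens2 sc x y) (T2el sc \<Delta> a c)) = eI (snd (\<Delta> c) (tens2 sc (x * a) y))" for y
      by (simp add: T2el_mult2_right tens2_T tens_one_tens2)
    also have "eI (snd (\<Delta> c) (tens2 sc (x * a) y)) = y * sc (\<epsilon> (x * a)) c" for y
      using counit_E_right[of c "x * a" y] E1 tens2_T
      by (simp add: meq_def mone_def one_tens_tens2 eI_tens2 sc_mult_r)
    finally have "y * ((\<Sum>i<n. sc (\<epsilon> (x * u i)) (u' i)) - sc (\<epsilon> (x * a)) c) = 0" for y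
      by (simp add: right_diff_distrib)
    then have "(\<Sum>i<n. sc (\<epsilon> (x * u i)) (u' i)) - sc (\<epsilon> (x * a)) c = 0"
      by (blast intro: zero_if_left_annihilated)
    then show ?thesis by simp
  qed
  have "a * c = (\<Sum>i<n. sc (\<epsilon> (u' i)) (u i))"
    using id_eps_T2el[of a c] unfolding u Ie_sum by simp
  then have "\<epsilon> (x * (a * c)) = (\<Sum>i<n. \<epsilon> (u' i) * \<epsilon> (x * u i))"
    by (simp add: sum_distrib_left sc_mult_r[symmetric] eps_sum eps_sc)
  also have "\<dots> = \<epsilon> (x * a) * \<epsilon> c"
    using arg_cong[OF slice, of \<epsilon>] by (simp add: eps_sum eps_sc mult.commute)
  finally show ?thesis .
qed

lemma counit_mult_if_E_one:
  assumes "meq T E mone"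
  shows "\<epsilon> (p * c) = \<epsilon> p * \<epsilon> c"
proof -
  obtain n x a where p: "p = (\<Sum>i<(n::nat). x i * a i)" using mult_surj by blast
  have "\<epsilon> (p * c) = (\<Sum>i<n. \<epsilon> (x i * (a i * c)))"
    unfolding p by (simp add: sum_distrib_right eps_sum mult.assoc)
  also have "\<dots> = (\<Sum>i<n. \<epsilon> (x i * a i)) * \<epsilon> c"
    by (simp add: counit_mult_assoc_if_E_one[OF assms] sum_distrib_right)
  also have "\<dots> = \<epsilon> p * \<epsilon> c" unfolding p by (simp add: eps_sum)
  finally show ?thesis .
qed

section \<open>Slices of \<Delta>, E, T1 and T2 under a multiplicative counit\<close>

context
  assumes M: "\<And>a b. \<epsilon> (a * b) = \<epsilon> a * \<epsilon> b"
begin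

lemma eps_id_Delta_left: "eI (fst (\<Delta> a) (tens2 sc b c)) = sc (\<epsilon> b) (a * c)"
proof -
  obtain n c1 c2 where c: "c = (\<Sum>i<(n::nat). c1 i * c2 i)" using mult_surj by blast
  have "tens2 sc b c = (\<Sum>i<n. fst (one_tens sc (c1 i)) (tens2 sc b (c2 i)))"
    unfolding c balanced_sum_right[OF balanced_tens2] by (simp add: one_tens_tens2)
  hence "fst (\<Delta> a) (tens2 sc b c) = (\<Sum>i<n. mult2 sc (T1el sc \<Delta> a (c1 i)) (tens2 sc b (c2 i)))"
    by (simp add: tlinear_sum[OF tlinear_Delta_left] tlinear_T[OF tlinear_one_tens(1)] tens2_T T1el_mult2_left)
  hence "eI (fst (\<Delta> a) (tens2 sc b c)) = (\<Sum>i<n. eI (mult2 sc (T1el sc \<Delta> a (c1 i)) (tens2 sc b (c2 i))))"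
    by (simp add: eps_id_sumT[OF lin_eps] mult2_T T1el_T tens2_T)
  also have "\<dots> = (\<Sum>i<n. sc (\<epsilon> b) (a * c1 i * c2 i))" by (simp add: eps_id_mult2_tens2[OF lin_eps M] T1el_T eps_id_T1el)
  also have "\<dots> = sc (\<epsilon> b) (a * c)" unfolding c by (simp add: sc_sum_r sum_distrib_left mult.assoc)
  finally show ?thesis .
qed

lemma id_eps_Delta_right: "Ie (snd (\<Delta> b) (tens2 sc p q)) = sc (\<epsilon> q) (p * b)"
proof -
  obtain n p1 p2 where p: "p = (\<Sum>i<(n::nat). p1 i * p2 i)" using mult_surj by blast
  have "tens2 sc p q = (\<Sum>i<n. snd (tens_one sc (p2 i)) (tens2 sc (p1 i) q))"
    unfolding p balanced_sum_left[OF balanced_tens2] by (simp add: tens_one_tens2)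
  hence "snd (\<Delta> b) (tens2 sc p q) = (\<Sum>i<n. mult2 sc (tens2 sc (p1 i) q) (T2el sc \<Delta> (p2 i) b))"
    by (simp add: tlinear_sum[OF tlinear_Delta_right] tlinear_T[OF tlinear_tens_one(2)] tens2_T T2el_mult2_right)
  hence "Ie (snd (\<Delta> b) (tens2 sc p q)) = (\<Sum>i<n. Ie (mult2 sc (tens2 sc (p1 i) q) (T2el sc \<Delta> (p2 i) b)))"
    by (simp add: id_eps_sumT[OF lin_eps] mult2_T T2el_T tens2_T)
  also have "\<dots> = (\<Sum>i<n. sc (\<epsilon> q) (p1 i * (p2 i * b)))" by (simp add: id_eps_tens2_mult2[OF lin_eps M] T2el_T id_eps_T2el)
  also have "\<dots> = sc (\<epsilon> q) (p * b)" unfolding p by (simp add: sc_sum_r sum_distrib_right mult.assoc)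
  finally show ?thesis .
qed

lemma id_eps_Delta_left: "Ie (fst (\<Delta> x) (tens2 sc u v)) = sc (\<epsilon> v) (x * u)"
proof -
  have "Ie (fst (\<Delta> x) (tens2 sc u v)) - sc (\<epsilon> v) (x * u) = 0"
  proof (rule zero_if_left_annihilated, intro allI)
    fix p
    have "p * Ie (fst (\<Delta> x) (tens2 sc u v)) = Ie (fst (tens_one sc p) (fst (\<Delta> x) (tens2 sc u v)))"
      by (simp add: id_eps_tens_one[OF lin_eps] tlinear_T[OF tlinear_Delta_left] tens2_T)
    also have "\<dots> = Ie (mult2 sc (T2el sc \<Delta> p x) (tens2 sc u v))" by (simp add: T2el_mult2_left tens2_T)
    also have "\<dots> = p * sc (\<epsilon> v) (x * u)" by (simp add: id_eps_mult2_tens2[OF lin_eps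
        M] T2el_T id_eps_T2el sc_mult_r mult.assoc)
    finally show "p * (Ie (fst (\<Delta> x) (tens2 sc u v)) - sc (\<epsilon> v) (x * u)) = 0"
      by (simp add: right_diff_distrib)
  qed
  thus ?thesis by simp
qed

lemma eps_id_E_left: "eI (fst E (tens2 sc n z)) = sc (\<epsilon> n) z"
proof -
  have "eI (fst E (tens2 sc n z)) - sc (\<epsilon> n) z = 0"
  proof (rule zero_if_left_annihilated, intro allI)
    fix a
    have "a * eI (fst E (tens2 sc n z)) = eI (fst (one_tens sc a) (fst E (tens2 sc n z)))"
      by (simp add: eps_id_one_tens[OF lin_eps] tlinear_T[OF tlinear_E_left] tens2_T)
    also have "\<dots> = a * sc (\<epsilon> n) z" by (simp add: counit_E_left eps_id_Delta_left sc_mult_r)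
    finally show "a * (eI (fst E (tens2 sc n z)) - sc (\<epsilon> n) z) = 0"
      by (simp add: right_diff_distrib)
  qed
  thus ?thesis by simp
qed

context
  fixes p0 assumes p0: "\<epsilon> p0 = 1"
begin

lemma eps_id_T2el: "eI (T2el sc \<Delta> a b) = sc (\<epsilon> a) b"
proof -
  have "eI (T2el sc \<Delta> a b) - sc (\<epsilon> a) b = 0"
  proof (rule zero_if_right_annihilated, intro allI)
    fix y
    have "eI (T2el sc \<Delta> a b) * y = eI (mult2 sc (T2el sc \<Delta> a b) (tens2 sc p0 y))"
      by (simp add: eps_id_mult2_tens2[OF lin_eps M] T2el_T p0 sc_one)
    also have "\<dots> = eI (fst (tens_one sc a) (fst (\<Delta> b) (tens2 sc p0 y)))" by (simp add: T2el_mult2_left tens2_T)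
    also have "\<dots> = sc (\<epsilon> a) b * y" by (simp add: eps_id_tens_one[OF lin_eps M]
        tlinear_T[OF tlinear_Delta_left] tens2_T eps_id_Delta_left p0 sc_one sc_mult_l)
    finally show "(eI (T2el sc \<Delta> a b) - sc (\<epsilon> a) b) * y = 0"
      by (simp add: left_diff_distrib)
  qed
  thus ?thesis by simp
qed

lemma id_eps_T1el: "Ie (T1el sc \<Delta> b a) = sc (\<epsilon> a) b"
proof -
  have "Ie (T1el sc \<Delta> b a) - sc (\<epsilon> a) b = 0"
  proof (rule zero_if_left_annihilated, intro allI)
    fix p
    have "p * Ie (T1el sc \<Delta> b a) = Ie (mult2 sc (tens2 sc p p0) (T1el sc \<Delta> b a))"
      by (simp add: id_eps_tens2_mult2[OF lin_eps M] T1el_T p0 sc_one)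
    also have "\<dots> = Ie (snd (one_tens sc a) (snd (\<Delta> b) (tens2 sc p p0)))" by (simp add: T1el_mult2_right tens2_T)
    also have "\<dots> = p * sc (\<epsilon> a) b" by (simp add: id_eps_one_tens[OF lin_eps M]
        tlinear_T[OF tlinear_Delta_right] tens2_T id_eps_Delta_right p0 sc_one sc_mult_r)
    finally show "p * (Ie (T1el sc \<Delta> b a) - sc (\<epsilon> a) b) = 0"
      by (simp add: right_diff_distrib)
  qed
  thus ?thesis by simp
qed

end
end

section \<open>A multiplicative counit forces E = 1\<close>

lemma E_left_idem: "s \<in> T \<Longrightarrow> fst E (fst E s) = fst E s"
  using E_idem unfolding meq_def mprod_def by auto

text \<open>By (iv) these elements lie in the span of the range of E, where the idempotent E
  acts as the identity.\<close>

lemma E_fixes_Delta_range: "fst E (fst (\<Delta> x) (tens2 sc u v)) = fst (\<Delta> x) (tens2 sc u v)"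
proof -
  let ?s = "fst (\<Delta> x) (tens2 sc u v)"
  have "?s \<in> fspan {fst (\<Delta> a) (tens2 sc b b') | a b b'. True}"
    unfolding fspan_def
    by (rule CollectI, rule exI[of _ "1::nat"], rule exI[of _ "\<lambda>_. 1"], rule exI[of _ "\<lambda>_. ?s"]) auto
  hence "?s \<in> fspan {fst E (tens2 sc b b') | b b'. True}" using Delta_E_range_span by simp
  then obtain n c y where s: "?s = (\<Sum>i<(n::nat). fsc (c i) (y i))"
    and y: "\<forall>i<n. y i \<in> {fst E (tens2 sc b b') | b b'. True}"
    unfolding fspan_def by blast
  have yT: "y i \<in> T" and yE: "fst E (y i) = y i" if "i < n" for i
    using y that by (auto simp: tlinear_T[OF tlinear_E_left] tens2_T E_left_idem)
  have "fst E ?s = (\<Sum>i<n. fst E (fsc (c i) (y i)))"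
    unfolding s by (rule tlinear_sum[OF tlinear_E_left]) (simp add: fsc_T yT)
  also have "\<dots> = ?s" unfolding s by (rule sum.cong) (simp_all add: tlinear_fsc[OF tlinear_E_left] yT yE)
  finally show ?thesis .
qed

lemma balanced3_Delta_tens_id: assumes F: "tlinear F" shows "balanced3 (\<lambda>u v r. rtens sc (F (tens2 sc u v)) (y * r))"
proof (rule balanced3I)
  fix a a' b d show "rtens sc (F (tens2 sc (a + a') b)) (y * d) = rtens sc (F (tens2 sc a b)) (y * d) + rtens sc (F (tens2 sc a' b)) (y * d)"
    by (simp add: tens2_add_l tlinear_add[OF F] tens2_T rtens_add_l tlinear_T[OF F])
next
  fix a b b' d show "rtens sc (F (tens2 sc a (b + b'))) (y * d) = rtens sc (F (tens2 sc a b)) (y * d) + rtens sc (F (tens2 sc a b')) (y * d)"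
    by (simp add: tens2_add_r tlinear_add[OF F] tens2_T rtens_add_l tlinear_T[OF F])
next
  fix a b d d' show "rtens sc (F (tens2 sc a b)) (y * (d + d')) = rtens sc (F (tens2 sc a b)) (y * d) + rtens sc (F (tens2 sc a b)) (y * d')"
    by (simp add: distrib_left rtens_add_r tlinear_T[OF F] tens2_T)
next
  fix c a b d show "rtens sc (F (tens2 sc (sc c a) b)) (y * d) = rtens sc (F (tens2 sc a (sc c b))) (y * d)"
    by (simp add: tens2_sc_l tens2_sc_r)
next
  fix c a b d show "rtens sc (F (tens2 sc a (sc c b))) (y * d) = rtens sc (F (tens2 sc a b)) (y * sc c d)"
    by (simp add: tens2_sc_r tlinear_fsc[OF F] tens2_T rtens_fsc tlinear_T[OF F] sc_mult_r)
qed

lemma balanced_Delta_tens_id: "balanced (\<lambda>x y. rtens sc (fst (\<Delta> x) (tens2 sc u v)) (y * r))"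
proof (rule balancedI)
  fix a a' b show "rtens sc (fst (\<Delta> (a + a')) (tens2 sc u v)) (b * r) = rtens sc (fst (\<Delta> a) (tens2 sc u v)) (b * r) + rtens sc (fst (\<Delta> a') (tens2 sc u v)) (b * r)"
    by (simp add: Delta_add_left tens2_T rtens_add_l tlinear_T[OF tlinear_Delta_left])
next
  fix a b b' show "rtens sc (fst (\<Delta> a) (tens2 sc u v)) ((b + b') * r) = rtens sc (fst (\<Delta> a) (tens2 sc u v)) (b * r) + rtens sc (fst (\<Delta> a) (tens2 sc u v)) (b' * r)"
    by (simp add: distrib_right rtens_add_r tlinear_T[OF tlinear_Delta_left] tens2_T)
next
  fix c a b show "rtens sc (fst (\<Delta> (sc c a)) (tens2 sc u v)) (b * r) = rtens sc (fst (\<Delta> a) (tens2 sc u v)) (sc c b * r)"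
    by (simp add: Delta_scale_left tens2_T rtens_fsc tlinear_T[OF tlinear_Delta_left] sc_mult_l)
qed

lemma Delta_tens_id_inner: "(\<lambda>x y. lift3 sc (\<lambda>u v r. rtens sc (fst (\<Delta> x) (tens2 sc u v)) (y * r)) (tens3 sc u v r))
   = (\<lambda>x y. rtens sc (fst (\<Delta> x) (tens2 sc u v)) (y * r))"
  by (simp add: lift3_tens3[OF balanced3_Delta_tens_id[OF tlinear_Delta_left]])

lemma Delta_tens_id_sum: "fst (Delta_tens_id sc \<Delta> (\<Sum>j<(n::nat). tens2 sc (f j) (f' j))) (tens3 sc u v r)
   = (\<Sum>j<n. rtens sc (fst (\<Delta> (f j)) (tens2 sc u v)) (f' j * r))"
  unfolding Delta_tens_id_def fst_conv Delta_tens_id_inner by (rule lift2_sum[OF balanced_Delta_tens_id])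

lemma Delta_tens_id_tens2: "fst (Delta_tens_id sc \<Delta> (tens2 sc x y)) (tens3 sc u v r)
   = rtens sc (fst (\<Delta> x) (tens2 sc u v)) (y * r)"
  unfolding Delta_tens_id_def fst_conv Delta_tens_id_inner by (rule lift2_tens2[OF balanced_Delta_tens_id])

lemma E_tens_one_fixes_Delta_tens_id:
  "fst (E_tens_one sc E) (fst (Delta_tens_id sc \<Delta> (tens2 sc x y)) (tens3 sc u v r))
     = fst (Delta_tens_id sc \<Delta> (tens2 sc x y)) (tens3 sc u v r)"
proof -
  obtain n s s' where s: "fst (\<Delta> x) (tens2 sc u v) = (\<Sum>i<(n::nat). tens2 sc (s i) (s' i))"
    using tlinear_T[OF tlinear_Delta_left tens2_T] by (rule TT2E)
  have "fst (E_tens_one sc E) (\<Sum>i<n. tens3 sc (s i) (s' i) (y * r))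
      = (\<Sum>i<n. rtens sc (fst E (tens2 sc (s i) (s' i))) (y * r))"
    by (rule E_tens_one_sum[OF tlinear_E_left])
  also have "\<dots> = rtens sc (\<Sum>i<n. fst E (tens2 sc (s i) (s' i))) (y * r)"
    unfolding rtens_def
    by (rule lift2_sumT[OF balanced_rtens, symmetric]) (simp add: tlinear_T[OF tlinear_E_left] tens2_T)
  also have "\<dots> = rtens sc (fst E (fst (\<Delta> x) (tens2 sc u v))) (y * r)"
    unfolding s by (subst tlinear_sum[OF tlinear_E_left]) (simp_all add: tens2_T)
  also have "\<dots> = (\<Sum>i<n. tens3 sc (s i) (s' i) (y * r))"
    unfolding E_fixes_Delta_range unfolding s rtens_sum ..
  finally show ?thesis unfolding Delta_tens_id_tens2 s rtens_sum .
qed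

lemma id_eps_id_Delta_tens_id:
  assumes M: "\<And>a b. \<epsilon> (a * b) = \<epsilon> a * \<epsilon> b" and p0: "\<epsilon> p0 = 1" and tT: "t \<in> T"
  shows "id_eps_id \<epsilon> (fst (Delta_tens_id sc \<Delta> t) (tens3 sc u p0 r)) = mult2 sc t (tens2 sc u r)"
proof -
  obtain m f f' where t: "t = (\<Sum>j<(m::nat). tens2 sc (f j) (f' j))" using tT by (rule TT2E)
  have "id_eps_id \<epsilon> (fst (Delta_tens_id sc \<Delta> t) (tens3 sc u p0 r))
      = (\<Sum>j<m. id_eps_id \<epsilon> (rtens sc (fst (\<Delta> (f j)) (tens2 sc u p0)) (f' j * r)))"
    unfolding t Delta_tens_id_sum
    by (simp add: id_eps_id_sumT[OF lin_eps] rtens_T3 tlinear_T[OF tlinear_Delta_left] tens2_T)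
  also have "\<dots> = mult2 sc t (tens2 sc u r)"
    unfolding t mult2_sum_r
    by (simp add: id_eps_id_rtens[OF lin_eps] tlinear_T[OF tlinear_Delta_left] tens2_T
        id_eps_Delta_left[OF M] p0 sc_one)
  finally show ?thesis .
qed

lemma id_eps_id_E3_Delta_tens_id:
  assumes M: "\<And>a b. \<epsilon> (a * b) = \<epsilon> a * \<epsilon> b" and p0: "\<epsilon> p0 = 1"
  shows "id_eps_id \<epsilon> (fst (one_tens_E sc E) (fst (E_tens_one sc E)
           (fst (Delta_tens_id sc \<Delta> (tens2 sc x y)) (tens3 sc u p0 r))))
         = mult2 sc (tens2 sc x y) (tens2 sc u r)"
proof -
  obtain n s s' where s: "fst (\<Delta> x) (tens2 sc u p0) = (\<Sum>i<(n::nat). tens2 sc (s i) (s' i))"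
    using tlinear_T[OF tlinear_Delta_left tens2_T] by (rule TT2E)
  have "id_eps_id \<epsilon> (fst (one_tens_E sc E) (fst (E_tens_one sc E)
           (fst (Delta_tens_id sc \<Delta> (tens2 sc x y)) (tens3 sc u p0 r))))
      = id_eps_id \<epsilon> (\<Sum>i<n. ltens sc (s i) (fst E (tens2 sc (s' i) (y * r))))"
    unfolding E_tens_one_fixes_Delta_tens_id unfolding Delta_tens_id_tens2 s rtens_sum
    by (simp add: one_tens_E_sum[OF tlinear_E_left])
  also have "\<dots> = (\<Sum>i<n. tens2 sc (s i) (eI (fst E (tens2 sc (s' i) (y * r)))))"
    by (simp add: id_eps_id_sumT[OF lin_eps] ltens_T3 tlinear_T[OF tlinear_E_left] tens2_T
        id_eps_id_ltens[OF lin_eps])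
  also have "\<dots> = tens2 sc (Ie (fst (\<Delta> x) (tens2 sc u p0))) (y * r)"
    unfolding s Ie_sum
    by (simp add: eps_id_E_left[OF M] tens2_sc_l tens2_sc_r balanced_sum_left[OF balanced_tens2])
  also have "\<dots> = mult2 sc (tens2 sc x y) (tens2 sc u r)"
    by (simp add: id_eps_Delta_left[OF M] p0 sc_one mult2_tens2)
  finally show ?thesis .
qed

lemma E_one_if_counit_mult:
  assumes M: "\<And>a b. \<epsilon> (a * b) = \<epsilon> a * \<epsilon> b" and p0: "\<epsilon> p0 = 1"
  shows "meq T E mone"
proof -
  obtain X where X_ext: "ext_value sc (Delta_tens_id sc \<Delta>) (E_tens_one sc E) E X"
    and X_prod: "meq T3 (mprod (one_tens_E sc E) (E_tens_one sc E)) X" using E3_exists by blast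
  have E_fixes_tens2: "fst E (tens2 sc x y) = tens2 sc x y" for x y
  proof (rule eq_if_mult2_tens2_eq)
    show "fst E (tens2 sc x y) \<in> T" by (simp add: tlinear_T[OF tlinear_E_left] tens2_T)
    fix u r
    let ?w = "fst (Delta_tens_id sc \<Delta> (tens2 sc x y)) (tens3 sc u p0 r)"
    have "?w \<in> T3"
      unfolding Delta_tens_id_tens2 by (simp add: rtens_T3 tlinear_T[OF tlinear_Delta_left] tens2_T)
    \<comment> \<open>by (v), (\<Delta> \<otimes> id)(E) and (1 \<otimes> E)(E \<otimes> 1) are the same multiplier E3\<close>
    then have E3: "fst (Delta_tens_id sc \<Delta> (fst E (tens2 sc x y))) (tens3 sc u p0 r)
        = fst (one_tens_E sc E) (fst (E_tens_one sc E) ?w)"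
      using X_ext X_prod tens2_T tens3_T unfolding ext_value_def meq_def mprod_def by auto
    have "mult2 sc (fst E (tens2 sc x y)) (tens2 sc u r)
        = id_eps_id \<epsilon> (fst (Delta_tens_id sc \<Delta> (fst E (tens2 sc x y))) (tens3 sc u p0 r))"
      by (rule id_eps_id_Delta_tens_id[OF M p0, symmetric]) (simp add: tlinear_T[OF tlinear_E_left] tens2_T)
    also have "\<dots> = mult2 sc (tens2 sc x y) (tens2 sc u r)"
      unfolding E3 by (rule id_eps_id_E3_Delta_tens_id[OF M p0])
    finally show "mult2 sc (fst E (tens2 sc x y)) (tens2 sc u r) = mult2 sc (tens2 sc x y) (tens2 sc u r)" .
  qed (rule tens2_T)
  have fst_E: "fst E t = t" if "t \<in> T" for t
    using that by (rule TT2E) (simp add: tlinear_sum[OF tlinear_E_left] tens2_T E_fixes_tens2)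
  have snd_E: "snd E t = t" if "t \<in> T" for t
  proof (rule eq_if_mult2_tens2_eq)
    fix u r
    have "mult2 sc t (fst E (tens2 sc u r)) = mult2 sc (snd E t) (tens2 sc u r)"
      using E_is_mlt that tens2_T unfolding is_mlt_def by blast
    then show "mult2 sc (snd E t) (tens2 sc u r) = mult2 sc t (tens2 sc u r)"
      by (simp add: E_fixes_tens2)
  qed (simp_all add: tlinear_T[OF tlinear_E_right] that)
  show ?thesis unfolding meq_def mone_def using fst_E snd_E by simp
qed

section \<open>The multipliers \<sqinter>L and \<sqinter>R\<close>

lemma eps_eps_id_eq_eps_id_eps: "t \<in> T \<Longrightarrow> \<epsilon> (eI t) = \<epsilon> (Ie t)"
  by (erule TT2E) (simp add: eI_sum Ie_sum eps_sum eps_sc mult.commute)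

lemma PiL_eq_counit_if_counit_mult:
  assumes M: "\<And>a b. \<epsilon> (a * b) = \<epsilon> a * \<epsilon> b" and p0: "\<epsilon> p0 = 1"
  shows "meq UNIV (PiL sc E \<Delta> \<epsilon> a) (msc sc (\<epsilon> a) mone)"
  using E_one_if_counit_mult[OF M p0] tens2_T
  by (simp add: meq_def PiL_def msc_def mone_def T2_tens2 eps_id_T2el[OF M p0] eI_tens2)

lemma PiR_eq_counit_if_counit_mult:
  assumes M: "\<And>a b. \<epsilon> (a * b) = \<epsilon> a * \<epsilon> b" and p0: "\<epsilon> p0 = 1"
  shows "meq UNIV (PiR sc E \<Delta> \<epsilon> a) (msc sc (\<epsilon> a) mone)"
  using E_one_if_counit_mult[OF M p0] tens2_T
  by (simp add: meq_def PiR_def msc_def mone_def T1_tens2 id_eps_T1el[OF M p0] Ie_tens2)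

lemma counit_mult_if_PiL_eq_counit:
  assumes "\<And>a. meq UNIV (PiL sc E \<Delta> \<epsilon> a) (msc sc (\<epsilon> a) mone)"
  shows "\<epsilon> (a * b) = \<epsilon> a * \<epsilon> b"
proof -
  have "eI (T2el sc \<Delta> a b) = sc (\<epsilon> a) b"
    using assms[of a] by (simp add: meq_def PiL_def msc_def mone_def T2_tens2)
  then have "\<epsilon> (Ie (T2el sc \<Delta> a b)) = \<epsilon> a * \<epsilon> b"
    by (simp add: eps_sc eps_eps_id_eq_eps_id_eps[symmetric] T2el_T)
  then show ?thesis by (simp add: id_eps_T2el)
qed

lemma counit_mult_if_PiR_eq_counit:
  assumes "\<And>b. meq UNIV (PiR sc E \<Delta> \<epsilon> b) (msc sc (\<epsilon> b) mone)"
  shows "\<epsilon> (a * b) = \<epsilon> a * \<epsilon> b"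
proof -
  have "Ie (T1el sc \<Delta> a b) = sc (\<epsilon> b) a"
    using assms[of b] by (simp add: meq_def PiR_def msc_def mone_def T1_tens2)
  then have "\<epsilon> (eI (T1el sc \<Delta> a b)) = \<epsilon> a * \<epsilon> b"
    by (simp add: eps_sc eps_eps_id_eq_eps_id_eps T1el_T mult.commute)
  then show ?thesis by (simp add: eps_id_T1el)
qed

section \<open>The degenerate case \<epsilon> = 0\<close>

lemma zero_if_counit_zero:
  assumes "\<And>p. \<epsilon> p = 0"
  shows "(x::'a) = 0"
proof (rule zero_if_right_annihilated, intro allI)
  fix y
  obtain n t t' where t: "T1el sc \<Delta> x y = (\<Sum>i<(n::nat). tens2 sc (t i) (t' i))"
    using T1el_T by (rule TT2E)
  have "x * y = eI (T1el sc \<Delta> x y)" by (simp add: eps_id_T1el)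
  also have "\<dots> = 0" unfolding t eI_sum by (simp add: assms)
  finally show "x * y = 0" .
qed

lemma E_one_if_counit_zero:
  assumes "\<And>p. \<epsilon> p = 0"
  shows "meq T E mone"
proof -
  have T_zero: "t = 0" if tT: "t \<in> T" for t
  proof -
    obtain n a b where t: "t = (\<Sum>i<(n::nat). tens2 sc (a i) (b i))" using tT by (rule TT2E)
    have "a i = 0" for i using zero_if_counit_zero[OF assms] .
    then show ?thesis unfolding t by simp
  qed
  show ?thesis
    using T_zero tlinear_zero[OF tlinear_E_left] tlinear_zero[OF tlinear_E_right]
    by (auto simp: meq_def mone_def)
qed

lemma counit_normalizable_or_zero: "(\<exists>p. \<epsilon> p = 1) \<or> (\<forall>p. \<epsilon> p = 0)"
proof (cases "\<exists>p. \<epsilon> p \<noteq> 0")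
  case True
  then obtain p where "\<epsilon> p \<noteq> 0" by blast
  then have "\<epsilon> (sc (inverse (\<epsilon> p)) p) = 1" by (simp add: eps_sc)
  then show ?thesis by blast
qed simp

end

theorem theorem2p11:
  fixes sc :: "'k::field \<Rightarrow> 'a::ring \<Rightarrow> 'a"
    and E :: "('k,'a) t2 mlt"
    and \<Delta> :: "'a \<Rightarrow> ('k,'a) t2 mlt"
    and \<epsilon> :: "'a \<Rightarrow> 'k"
  assumes "weak_multiplier_bialgebra sc E \<Delta> \<epsilon>"
  shows "(meq (TT2 sc) E mone \<longleftrightarrow> (\<forall>a b. \<epsilon> (a * b) = \<epsilon> a * \<epsilon> b)) \<and>
         (meq (TT2 sc) E mone \<longleftrightarrow> (\<forall>a. meq UNIV (PiL sc E \<Delta> \<epsilon> a) (msc sc (\<epsilon> a) mone))) \<and>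
         (meq (TT2 sc) E mone \<longleftrightarrow> (\<forall>a. meq UNIV (PiR sc E \<Delta> \<epsilon> a) (msc sc (\<epsilon> a) mone)))"
proof -
  interpret weak_mult_bialg sc E \<Delta> \<epsilon> by unfold_locales (rule assms)
  consider p0 where "\<epsilon> p0 = 1" | "\<And>p. \<epsilon> p = 0" using counit_normalizable_or_zero by blast
  then show ?thesis
  proof cases
    case 1
    then show ?thesis
      using counit_mult_if_E_one E_one_if_counit_mult
        PiL_eq_counit_if_counit_mult counit_mult_if_PiL_eq_counit
        PiR_eq_counit_if_counit_mult counit_mult_if_PiR_eq_counit by metis
  next
    case 2
    then have "\<And>m m' :: 'a mlt. meq UNIV m m'" unfolding meq_def using zero_if_counit_zero by metis
    then show ?thesis using E_one_if_counit_zero[OF 2] by (simp add: 2)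
  qed
qed

end
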